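(* Let $\lambda$ be a character of $\mathcal{G}r'$. Then $\lambda$ is invertible for the product $\star$ if and only if $\lambda(\bullet_A)\neq0$ for every nonempty finite set $A$, where $\bullet_A\in\mathcal{G}r'[A]$ is the graph with the single vertex $A$.
   Context: Work over a field $\mathbb{K}$. $\mathcal{G}r'[A]$ is the vector space spanned by simple graphs $G$ whose vertex set is a partition of the finite set $A$ into nonempty blocks; bijections act on the elements of $A$; the product is disjoint union of graphs. An equivalence $\sim$ on $A$ satisfies $\sim\triangleleft G$ if elements in the same vertex of $G$ are equivalent and the induced subgraph $G_{\mid C}$ (on the vertices contained in $C$) is connected for each class $C$; then $G\mid\sim$ is the disjoint union of the $G_{\mid C}$ and $G/\sim$ has the classes of $\sim$ as vertices, two distinct classes being adjacent iff some edge of $G$ joins vertices contained in them. A character of $\mathcal{G}r'$ is a family of linear forms $\lambda[A]:\mathcal{G}r'[A]\to\mathbb{K}$ invariant under bijections, with $\lambda(GH)=\lambda(G)\lambda(H)$ and $\lambda(\text{empty graph})=1$. The product of characters is $(\lambda\star\mu)(G)=\sum_{\sim\triangleleft G}\lambda(G/\sim)\mu(G\mid\sim)$; its unit is $\varepsilon'$, with $\varepsilon'(G)=1$ if $G$ has no edge and $0$ otherwise. *)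

theory Defs
  imports Main
begin

text \<open>A graph of Gr' is represented by a pair (V, E): V is a partition of the finite
  ground set A = Union V into nonempty blocks (the vertices), E is a set of
  two-element sets of vertices (the edges).  Ground elements are taken in nat
  (any finite set is in bijection with a finite subset of nat, and characters are
  invariant under bijections).  Linear forms on the span of graphs are identified
  with their values on the basis of graphs.\<close>

type_synonym graph = "nat set set \<times> nat set set set"

definition partition_of :: "'a set set \<Rightarrow> 'a set \<Rightarrow> bool" where
  "partition_of P A \<longleftrightarrow> (\<forall>B\<in>P. B \<noteq> {}) \<and> (\<forall>B\<in>P. \<forall>C\<in>P. B \<noteq> C \<longrightarrow> B \<inter> C = {})
     \<and> \<Union>P = A"

definition is_graph :: "graph \<Rightarrow> bool" where
  "is_graph G \<longleftrightarrow> finite (\<Union>(fst G)) \<and> partition_of (fst G) (\<Union>(fst G)) \<and>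
     (\<forall>e\<in>snd G. \<exists>v w. v \<in> fst G \<and> w \<in> fst G \<and> v \<noteq> w \<and> e = {v, w})"

definition map_graph :: "(nat \<Rightarrow> nat) \<Rightarrow> graph \<Rightarrow> graph" where
  "map_graph f G = ((`) f ` fst G, (`) ((`) f) ` snd G)"

definition graph_union :: "graph \<Rightarrow> graph \<Rightarrow> graph" where
  "graph_union G H = (fst G \<union> fst H, snd G \<union> snd H)"

definition empty_graph :: graph where
  "empty_graph = ({}, {})"

definition character :: "(graph \<Rightarrow> 'k::field) \<Rightarrow> bool" where
  "character lam \<longleftrightarrow>
     (\<forall>G f. is_graph G \<and> inj_on f (\<Union>(fst G)) \<longrightarrow> lam (map_graph f G) = lam G) \<and>
     (\<forall>G H. is_graph G \<and> is_graph H \<and> \<Union>(fst G) \<inter> \<Union>(fst H) = {} \<longrightarrow>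
            lam (graph_union G H) = lam G * lam H) \<and>
     lam empty_graph = 1"

definition connected_on :: "nat set set set \<Rightarrow> nat set set \<Rightarrow> bool" where
  "connected_on E W \<longleftrightarrow> W \<noteq> {} \<and>
     (\<forall>v\<in>W. \<forall>w\<in>W. (v, w) \<in> {(x, y). x \<in> W \<and> y \<in> W \<and> {x, y} \<in> E}\<^sup>*)"

text \<open>An equivalence on A, given by its set of classes P, with P \<lhd> G.\<close>
definition admissible :: "nat set set \<Rightarrow> graph \<Rightarrow> bool" where
  "admissible P G \<longleftrightarrow> partition_of P (\<Union>(fst G)) \<and>
     (\<forall>v\<in>fst G. \<exists>C\<in>P. v \<subseteq> C) \<and>
     (\<forall>C\<in>P. connected_on (snd G) {v \<in> fst G. v \<subseteq> C})"

text \<open>G | ~ : disjoint union of the induced subgraphs on the classes.\<close>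
definition restr_graph :: "graph \<Rightarrow> nat set set \<Rightarrow> graph" where
  "restr_graph G P = (fst G, {e \<in> snd G. \<exists>C\<in>P. \<Union>e \<subseteq> C})"

definition quot_graph :: "graph \<Rightarrow> nat set set \<Rightarrow> graph" where
  "quot_graph G P = (P, {{C, D} | C D. C \<in> P \<and> D \<in> P \<and> C \<noteq> D \<and>
       (\<exists>v w. {v, w} \<in> snd G \<and> v \<subseteq> C \<and> w \<subseteq> D)})"

definition char_prod :: "(graph \<Rightarrow> 'k::field) \<Rightarrow> (graph \<Rightarrow> 'k) \<Rightarrow> graph \<Rightarrow> 'k" where
  "char_prod lam mu G = (\<Sum>P\<in>{P. admissible P G}. lam (quot_graph G P) * mu (restr_graph G P))"

definition eps' :: "graph \<Rightarrow> 'k::field" where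
  "eps' G = (if snd G = {} then 1 else 0)"

definition char_invertible :: "(graph \<Rightarrow> 'k::field) \<Rightarrow> bool" where
  "char_invertible lam \<longleftrightarrow> (\<exists>mu. character mu \<and>
     (\<forall>G. is_graph G \<longrightarrow> char_prod lam mu G = eps' G \<and> char_prod mu lam G = eps' G))"

definition bullet :: "nat set \<Rightarrow> graph" where
  "bullet A = ({A}, {})"

end

theory Submission
  imports Defs
begin

text \<open>If \<open>lam \<star> mu = eps'\<close>, evaluating at the one-vertex graph \<open>bullet A\<close>, whose only
  admissible partition is the trivial one, gives \<open>lam (bullet A) * mu (bullet A) = 1\<close>.
  Conversely, among the admissible partitions of \<open>G\<close> exactly one, the partition into connected
  components, is internal (it keeps every edge in \<open>G | ~\<close>, so \<open>G | ~ = G\<close>); every other one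
  has strictly fewer edges in \<open>G | ~\<close>. Hence \<open>lam \<star> mu = eps'\<close> can be solved for \<open>mu G\<close> by
  recursion on the number of edges, dividing by \<open>lam (G / ~)\<close>, which is a product of values
  \<open>lam (bullet C)\<close> because \<open>G / ~\<close> is edgeless. The same recursion shows, by induction on the
  number of edges, that \<open>mu\<close> is invariant under relabelling and multiplicative on disjoint
  unions, i.e. a character. Finally \<open>\<star>\<close> is associative with unit \<open>eps'\<close>, so the right inverse
  \<open>mu\<close>, which has a right inverse of its own, is a two-sided inverse.\<close>

section \<open>Partitions and graphs\<close>

lemma partition_of_nonempty: "partition_of P A \<Longrightarrow> B \<in> P \<Longrightarrow> B \<noteq> {}"
  unfolding partition_of_def by simp

lemma partition_of_disjoint: "partition_of P A \<Longrightarrow> B \<in> P \<Longrightarrow> C \<in> P \<Longrightarrow> B \<noteq> C \<Longrightarrow> B \<inter> C = {}"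
  unfolding partition_of_def by simp

lemma partition_of_Union: "partition_of P A \<Longrightarrow> \<Union>P = A"
  unfolding partition_of_def by simp

lemma partition_of_block_eq:
  assumes "partition_of P A" "C \<in> P" "D \<in> P" "x \<in> C" "x \<in> D"
  shows "C = D"
  using partition_of_disjoint[OF assms(1-3)] assms(4,5) by blast

lemma partition_of_subset_block_eq:
  assumes "partition_of P A" "C \<in> P" "D \<in> P" "v \<subseteq> C" "v \<subseteq> D" "v \<noteq> {}"
  shows "C = D"
  using partition_of_block_eq[OF assms(1-3)] assms(4-6) by blast

lemma partition_of_Un:
  assumes P: "partition_of P A" and Q: "partition_of Q B" and AB: "A \<inter> B = {}"
  shows "partition_of (P \<union> Q) (A \<union> B)"
proof -
  have "C \<subseteq> A" if "C \<in> P" for C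
    using that partition_of_Union[OF P] by blast
  moreover have "D \<subseteq> B" if "D \<in> Q" for D
    using that partition_of_Union[OF Q] by blast
  ultimately have "C \<inter> D = {}" "D \<inter> C = {}" if "C \<in> P" "D \<in> Q" for C D
    using that AB by blast+
  then show ?thesis
    using P Q unfolding partition_of_def by (metis Un_iff Union_Un_distrib)
qed

lemma inj_on_image_subset_iff:
  assumes "inj_on f A" "B \<subseteq> A" "C \<subseteq> A"
  shows "f ` B \<subseteq> f ` C \<longleftrightarrow> B \<subseteq> C"
proof
  assume "f ` B \<subseteq> f ` C"
  then show "B \<subseteq> C"
    using inj_on_image_mem_iff[OF assms(1) _ assms(3)] assms(2) by blast
qed (rule image_mono)

lemma partition_of_image:
  assumes f: "inj_on f A" and P: "partition_of P A"
  shows "partition_of ((`) f ` P) (f ` A)"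
  unfolding partition_of_def
proof (intro conjI ballI impI)
  have sub: "B \<subseteq> A" if "B \<in> P" for B
    using partition_of_Union[OF P] that by blast
  fix B' C' assume "B' \<in> (`) f ` P" "C' \<in> (`) f ` P" "B' \<noteq> C'"
  then obtain B C where BC: "B \<in> P" "C \<in> P" "B \<noteq> C" "B' = f ` B" "C' = f ` C"
    by blast
  then show "B' \<inter> C' = {}"
    using partition_of_disjoint[OF P BC(1-3)] inj_on_image_Int[OF f sub[OF BC(1)] sub[OF BC(2)]]
    by simp
qed (use partition_of_nonempty[OF P] partition_of_Union[OF P] in auto)

lemma is_graphD:
  assumes "is_graph G"
  shows "finite (\<Union>(fst G))" "partition_of (fst G) (\<Union>(fst G))"
    "\<And>e. e \<in> snd G \<Longrightarrow> \<exists>v w. v \<in> fst G \<and> w \<in> fst G \<and> v \<noteq> w \<and> e = {v, w}"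
  using assms unfolding is_graph_def by simp_all

lemma is_graph_edgeE:
  assumes "is_graph G" "e \<in> snd G"
  obtains v w where "v \<in> fst G" "w \<in> fst G" "v \<noteq> w" "e = {v, w}"
  using is_graphD(3)[OF assms] by blast

lemma is_graph_vertex_nonempty: "is_graph G \<Longrightarrow> v \<in> fst G \<Longrightarrow> v \<noteq> {}"
  using is_graphD(2) partition_of_nonempty by blast

lemma is_graph_vertex_eq:
  "is_graph G \<Longrightarrow> v \<in> fst G \<Longrightarrow> w \<in> fst G \<Longrightarrow> x \<in> v \<Longrightarrow> x \<in> w \<Longrightarrow> v = w"
  using is_graphD(2) partition_of_block_eq by metis

lemma is_graph_vertex_subset_eq:
  "is_graph G \<Longrightarrow> v \<in> fst G \<Longrightarrow> w \<in> fst G \<Longrightarrow> v \<subseteq> w \<Longrightarrow> v = w"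
  using is_graph_vertex_eq is_graph_vertex_nonempty by blast

lemma is_graph_edge_vertices:
  assumes "is_graph G" "{x, y} \<in> snd G"
  shows "x \<in> fst G" "y \<in> fst G" "x \<noteq> y"
  using is_graphD(3)[OF assms] by (auto simp: doubleton_eq_iff)

lemma finite_vertices: "is_graph G \<Longrightarrow> finite (fst G)"
  unfolding is_graph_def by (meson finite_UnionD)

lemma finite_edges: "is_graph G \<Longrightarrow> finite (snd G)"
proof -
  assume g: "is_graph G"
  have "snd G \<subseteq> Pow (fst G)"
    using is_graphD(3)[OF g] by blast
  then show ?thesis
    using finite_vertices[OF g] by (meson finite_Pow_iff finite_subset)
qed

lemma is_graph_edgeless:
  assumes "finite P" "\<And>B. B \<in> P \<Longrightarrow> finite B" "partition_of P (\<Union>P)"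
  shows "is_graph (P, {})"
  using assms unfolding is_graph_def by auto

lemma is_graph_bullet: "finite A \<Longrightarrow> A \<noteq> {} \<Longrightarrow> is_graph (bullet A)"
  unfolding bullet_def is_graph_def partition_of_def by simp

section \<open>Connectivity\<close>

definition edge_rel :: "nat set set set \<Rightarrow> nat set set \<Rightarrow> (nat set \<times> nat set) set" where
  "edge_rel E W = {(x, y). x \<in> W \<and> y \<in> W \<and> {x, y} \<in> E}"

lemma connected_on_iff:
  "connected_on E W \<longleftrightarrow> W \<noteq> {} \<and> (\<forall>v\<in>W. \<forall>w\<in>W. (v, w) \<in> (edge_rel E W)\<^sup>*)"
  unfolding connected_on_def edge_rel_def by simp

lemma connected_on_nonempty: "connected_on E W \<Longrightarrow> W \<noteq> {}"
  unfolding connected_on_def by simp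

lemma connected_on_rtrancl: "connected_on E W \<Longrightarrow> a \<in> W \<Longrightarrow> b \<in> W \<Longrightarrow> (a, b) \<in> (edge_rel E W)\<^sup>*"
  unfolding connected_on_iff by blast

lemma sym_edge_rel: "sym (edge_rel E W)"
  unfolding edge_rel_def sym_def by (auto simp: insert_commute)

lemma edge_rel_rtrancl_sym: "(a, b) \<in> (edge_rel E W)\<^sup>* \<Longrightarrow> (b, a) \<in> (edge_rel E W)\<^sup>*"
  using sym_rtrancl[OF sym_edge_rel] unfolding sym_def by blast

lemma edge_rel_rtrancl_mono:
  "W \<subseteq> W' \<Longrightarrow> (a, b) \<in> (edge_rel E W)\<^sup>* \<Longrightarrow> (a, b) \<in> (edge_rel E W')\<^sup>*"
  using rtrancl_mono[of "edge_rel E W" "edge_rel E W'"] unfolding edge_rel_def by blast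

lemma rtrancl_image_hom:
  assumes "(x, y) \<in> r\<^sup>*" and "\<And>a b. (a, b) \<in> r \<Longrightarrow> (f a, f b) \<in> s\<^sup>*"
  shows "(f x, f y) \<in> s\<^sup>*"
  using assms(1) by induction (auto intro: rtrancl_trans assms(2))

lemma connected_on_mono_edges:
  assumes "connected_on E W" "\<And>x y. x \<in> W \<Longrightarrow> y \<in> W \<Longrightarrow> {x, y} \<in> E \<Longrightarrow> {x, y} \<in> E'"
  shows "connected_on E' W"
proof -
  have "edge_rel E W \<subseteq> edge_rel E' W"
    using assms(2) unfolding edge_rel_def by auto
  then show ?thesis
    using assms(1) unfolding connected_on_iff by (meson rtrancl_mono subsetD)
qed

lemma connected_on_subset_closed:
  assumes "connected_on E W" "v \<in> W" "v \<in> S"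
    "\<And>x y. x \<in> W \<Longrightarrow> y \<in> W \<Longrightarrow> {x, y} \<in> E \<Longrightarrow> x \<in> S \<Longrightarrow> y \<in> S"
  shows "W \<subseteq> S"
proof
  fix u assume "u \<in> W"
  then have "(v, u) \<in> (edge_rel E W)\<^sup>*"
    using connected_on_rtrancl assms(1,2) by blast
  then show "u \<in> S"
    by induction (use assms(3,4) in \<open>auto simp: edge_rel_def\<close>)
qed

lemma connected_on_within_block:
  assumes g: "is_graph G" and Q: "partition_of Q (\<Union>(fst G))"
    and cov: "\<And>v. v \<in> fst G \<Longrightarrow> \<exists>D\<in>Q. v \<subseteq> D"
    and c: "connected_on E W" and W: "W \<subseteq> fst G"
    and e: "\<And>x y. x \<in> W \<Longrightarrow> y \<in> W \<Longrightarrow> {x, y} \<in> E \<Longrightarrow> \<exists>D\<in>Q. x \<subseteq> D \<and> y \<subseteq> D"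
  shows "\<exists>D\<in>Q. \<Union>W \<subseteq> D"
proof -
  obtain v where v: "v \<in> W"
    using connected_on_nonempty[OF c] by blast
  then obtain D where D: "D \<in> Q" "v \<subseteq> D"
    using cov W by blast
  have "W \<subseteq> {u. u \<subseteq> D}"
  proof (rule connected_on_subset_closed[OF c v])
    fix x y assume xy: "x \<in> W" "y \<in> W" "{x, y} \<in> E" "x \<in> {u. u \<subseteq> D}"
    obtain D' where D': "D' \<in> Q" "x \<subseteq> D'" "y \<subseteq> D'"
      using e[OF xy(1-3)] by blast
    have "D' = D"
      using partition_of_subset_block_eq[OF Q D'(1) D(1) D'(2)] xy(1,4) W
        is_graph_vertex_nonempty[OF g] by auto
    then show "y \<in> {u. u \<subseteq> D}"
      using D' by simp
  qed (use D in simp)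
  then show ?thesis
    using D by auto
qed

section \<open>Admissible partitions, restrictions and quotients\<close>

lemma admissibleD:
  assumes "admissible P G"
  shows "partition_of P (\<Union>(fst G))" "\<And>v. v \<in> fst G \<Longrightarrow> \<exists>C\<in>P. v \<subseteq> C"
    "\<And>C. C \<in> P \<Longrightarrow> connected_on (snd G) {v \<in> fst G. v \<subseteq> C}"
  using assms unfolding admissible_def by simp_all

lemma admissible_block_unique:
  assumes "is_graph G" "admissible P G" "v \<in> fst G" "C \<in> P" "D \<in> P" "v \<subseteq> C" "v \<subseteq> D"
  shows "C = D"
  using partition_of_subset_block_eq[OF admissibleD(1)[OF assms(2)] assms(4-7)]
    is_graph_vertex_nonempty[OF assms(1,3)] .

lemma admissible_block_subset:
  assumes "admissible P G" "C \<in> P"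
  shows "C \<subseteq> \<Union>(fst G)"
  using partition_of_Union[OF admissibleD(1)[OF assms(1)]] assms(2) by blast

lemma admissible_block_eq_Union:
  assumes g: "is_graph G" and P: "admissible P G" and C: "C \<in> P"
  shows "C = \<Union>{v \<in> fst G. v \<subseteq> C}"
proof
  show "C \<subseteq> \<Union>{v \<in> fst G. v \<subseteq> C}"
  proof
    fix x assume x: "x \<in> C"
    then obtain v where v: "v \<in> fst G" "x \<in> v"
      using admissible_block_subset[OF P C] by blast
    obtain D where D: "D \<in> P" "v \<subseteq> D"
      using admissibleD(2)[OF P v(1)] by blast
    have "D = C"
      using partition_of_block_eq[OF admissibleD(1)[OF P] D(1) C] x v(2) D(2) by blast
    then show "x \<in> \<Union>{v \<in> fst G. v \<subseteq> C}"
      using v D by blast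
  qed
qed blast

lemma finite_admissible:
  assumes "is_graph G"
  shows "finite {P. admissible P G}"
proof -
  have "{P. admissible P G} \<subseteq> Pow (Pow (\<Union>(fst G)))"
    using admissible_block_subset by blast
  then show ?thesis
    using is_graphD(1)[OF assms] by (meson finite_Pow_iff finite_subset)
qed

lemma admissible_vertices:
  assumes g: "is_graph G"
  shows "admissible (fst G) G"
proof -
  have "{v \<in> fst G. v \<subseteq> C} = {C}" if "C \<in> fst G" for C
    using is_graph_vertex_subset_eq[OF g _ that] that by blast
  then show ?thesis
    unfolding admissible_def connected_on_def using is_graphD(2)[OF g] by auto
qed

lemma fst_restr_graph [simp]: "fst (restr_graph G P) = fst G"
  unfolding restr_graph_def by simp

lemma fst_quot_graph [simp]: "fst (quot_graph G P) = P"
  unfolding quot_graph_def by simp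

lemma restr_graph_edge_iff: "e \<in> snd (restr_graph G P) \<longleftrightarrow> e \<in> snd G \<and> (\<exists>C\<in>P. \<Union>e \<subseteq> C)"
  unfolding restr_graph_def by simp

lemma restr_graph_edges_subset: "snd (restr_graph G P) \<subseteq> snd G"
  unfolding restr_graph_def by auto

lemma quot_graph_edge_iff:
  "e \<in> snd (quot_graph G P) \<longleftrightarrow> (\<exists>C D. e = {C, D} \<and> C \<in> P \<and> D \<in> P \<and> C \<noteq> D \<and>
       (\<exists>v w. {v, w} \<in> snd G \<and> v \<subseteq> C \<and> w \<subseteq> D))"
  unfolding quot_graph_def by (simp only: snd_conv mem_Collect_eq)

lemma quot_graph_edgeE:
  assumes "e \<in> snd (quot_graph G P)"
  obtains C D v w where "e = {C, D}" "C \<in> P" "D \<in> P" "C \<noteq> D" "{v, w} \<in> snd G" "v \<subseteq> C" "w \<subseteq> D"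
  using assms unfolding quot_graph_edge_iff by blast

lemma quot_graph_edgeI:
  assumes "C \<in> P" "D \<in> P" "C \<noteq> D" "{v, w} \<in> snd G" "v \<subseteq> C" "w \<subseteq> D"
  shows "{C, D} \<in> snd (quot_graph G P)"
  unfolding quot_graph_edge_iff using assms by blast

lemma quot_graph_edge_witness:
  assumes "{C1, C2} \<in> snd (quot_graph G P)"
  obtains x y where "{x, y} \<in> snd G" "x \<subseteq> C1" "y \<subseteq> C2"
proof -
  obtain C D v w where c: "{C1, C2} = {C, D}" "{v, w} \<in> snd G" "v \<subseteq> C" "w \<subseteq> D"
    using assms by (rule quot_graph_edgeE)
  have "{w, v} \<in> snd G"
    using c(2) by (simp add: insert_commute)
  with c that show ?thesis
    unfolding doubleton_eq_iff by blast
qed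

lemma is_graph_restr:
  assumes "is_graph G"
  shows "is_graph (restr_graph G P)"
  using assms restr_graph_edges_subset[of G P] unfolding is_graph_def fst_restr_graph by blast

lemma is_graph_quot:
  assumes g: "is_graph G" and P: "partition_of P (\<Union>(fst G))"
  shows "is_graph (quot_graph G P)"
  unfolding is_graph_def fst_quot_graph partition_of_Union[OF P]
proof (intro conjI ballI)
  fix e assume "e \<in> snd (quot_graph G P)"
  then show "\<exists>v w. v \<in> P \<and> w \<in> P \<and> v \<noteq> w \<and> e = {v, w}"
    by (rule quot_graph_edgeE) blast
qed (use P is_graphD(1)[OF g] in auto)

definition internal :: "nat set set \<Rightarrow> graph \<Rightarrow> bool" where
  "internal P G \<longleftrightarrow> (\<forall>e\<in>snd G. \<exists>C\<in>P. \<Union>e \<subseteq> C)"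

lemma internal_iff_restr_edges: "internal P G \<longleftrightarrow> snd (restr_graph G P) = snd G"
  unfolding internal_def restr_graph_def by auto

lemma restr_graph_internal: "internal P G \<Longrightarrow> restr_graph G P = G"
  unfolding internal_iff_restr_edges by (simp add: prod_eq_iff)

lemma internal_edge:
  assumes "internal P G" "{x, y} \<in> snd G"
  shows "\<exists>D\<in>P. x \<subseteq> D \<and> y \<subseteq> D"
proof -
  obtain D where "D \<in> P" "\<Union>{x, y} \<subseteq> D"
    using assms unfolding internal_def by blast
  then show ?thesis
    by auto
qed

lemma card_restr_edges_less:
  assumes "is_graph G" "\<not> internal P G"
  shows "card (snd (restr_graph G P)) < card (snd G)"
proof (rule psubset_card_mono)
  show "snd (restr_graph G P) \<subset> snd G"
    using assms(2) restr_graph_edges_subset[of G P] unfolding internal_iff_restr_edges by blast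
qed (rule finite_edges[OF assms(1)])

lemma card_restr_edges_le: "is_graph G \<Longrightarrow> card (snd (restr_graph G P)) \<le> card (snd G)"
  by (rule card_mono[OF finite_edges restr_graph_edges_subset])

lemma restr_graph_neq_card_less:
  assumes "is_graph G" "restr_graph G P \<noteq> G"
  shows "card (snd (restr_graph G P)) < card (snd G)"
  using card_restr_edges_less[OF assms(1)] restr_graph_internal assms(2) by blast

lemma admissible_internal_refines:
  assumes g: "is_graph G" and P: "admissible P G" and Q: "admissible Q G" "internal Q G"
    and C: "C \<in> P"
  shows "\<exists>D\<in>Q. C \<subseteq> D"
proof -
  have "\<exists>D\<in>Q. \<Union>{v \<in> fst G. v \<subseteq> C} \<subseteq> D"
    by (rule connected_on_within_block[OF g admissibleD(1,2)[OF Q(1)] admissibleD(3)[OF P C]])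
      (use internal_edge[OF Q(2)] in auto)
  then show ?thesis
    using admissible_block_eq_Union[OF g P C] by auto
qed

lemma admissible_internal_unique:
  assumes g: "is_graph G" and P: "admissible P G" "internal P G"
    and Q: "admissible Q G" "internal Q G"
  shows "P \<subseteq> Q"
proof
  fix C assume C: "C \<in> P"
  obtain D where D: "D \<in> Q" "C \<subseteq> D"
    using admissible_internal_refines[OF g P(1) Q C] by blast
  obtain C' where C': "C' \<in> P" "D \<subseteq> C'"
    using admissible_internal_refines[OF g Q(1) P D(1)] by blast
  have "C = C'"
    using partition_of_subset_block_eq[OF admissibleD(1)[OF P(1)] C C'(1)] D(2) C'(2)
      partition_of_nonempty[OF admissibleD(1)[OF P(1)] C] by auto
  then show "C \<in> Q"
    using D C'(2) by auto
qed

section \<open>Connected components\<close>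

definition component :: "graph \<Rightarrow> nat set \<Rightarrow> nat set" where
  "component G v = \<Union>{w \<in> fst G. (v, w) \<in> (edge_rel (snd G) (fst G))\<^sup>*}"

definition components :: "graph \<Rightarrow> nat set set" where
  "components G = component G ` fst G"

lemma vertex_subset_component: "v \<in> fst G \<Longrightarrow> v \<subseteq> component G v"
  unfolding component_def by blast

lemma component_eq:
  assumes "(v1, v2) \<in> (edge_rel (snd G) (fst G))\<^sup>*"
  shows "component G v1 = component G v2"
proof -
  have "(v2, v1) \<in> (edge_rel (snd G) (fst G))\<^sup>*"
    using assms edge_rel_rtrancl_sym by blast
  then have "{w \<in> fst G. (v1, w) \<in> (edge_rel (snd G) (fst G))\<^sup>*}
      = {w \<in> fst G. (v2, w) \<in> (edge_rel (snd G) (fst G))\<^sup>*}"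
    using assms by (meson rtrancl_trans)
  then show ?thesis
    unfolding component_def by simp
qed

lemma vertex_in_component:
  assumes g: "is_graph G" and u: "u \<in> fst G" "u \<subseteq> component G v"
  shows "(v, u) \<in> (edge_rel (snd G) (fst G))\<^sup>*"
proof -
  obtain x where x: "x \<in> u"
    using is_graph_vertex_nonempty[OF g u(1)] by blast
  then obtain w where w: "w \<in> fst G" "(v, w) \<in> (edge_rel (snd G) (fst G))\<^sup>*" "x \<in> w"
    using u(2) unfolding component_def by blast
  then show ?thesis
    using is_graph_vertex_eq[OF g u(1) w(1) x w(3)] by simp
qed

lemma component_eq_if_common:
  assumes g: "is_graph G" and x: "x \<in> component G v1" "x \<in> component G v2"
  shows "component G v1 = component G v2"
proof -
  obtain w1 where w1: "w1 \<in> fst G" "(v1, w1) \<in> (edge_rel (snd G) (fst G))\<^sup>*" "x \<in> w1"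
    using x(1) unfolding component_def by blast
  obtain w2 where w2: "w2 \<in> fst G" "(v2, w2) \<in> (edge_rel (snd G) (fst G))\<^sup>*" "x \<in> w2"
    using x(2) unfolding component_def by blast
  have "w1 = w2"
    using is_graph_vertex_eq[OF g w1(1) w2(1) w1(3) w2(3)] .
  then show ?thesis
    using component_eq[OF w1(2)] component_eq[OF w2(2)] by simp
qed

lemma partition_components:
  assumes g: "is_graph G"
  shows "partition_of (components G) (\<Union>(fst G))"
  unfolding partition_of_def components_def
proof (intro conjI ballI impI)
  fix B assume "B \<in> component G ` fst G"
  then show "B \<noteq> {}"
    using vertex_subset_component is_graph_vertex_nonempty[OF g] by blast
next
  fix B C assume "B \<in> component G ` fst G" "C \<in> component G ` fst G" "B \<noteq> C"
  then show "B \<inter> C = {}"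
    using component_eq_if_common[OF g] by blast
next
  show "\<Union>(component G ` fst G) = \<Union>(fst G)"
    using vertex_subset_component unfolding component_def by blast
qed

lemma internal_components:
  assumes g: "is_graph G"
  shows "internal (components G) G"
  unfolding internal_def
proof
  fix e assume e: "e \<in> snd G"
  obtain x y where xy: "x \<in> fst G" "y \<in> fst G" "e = {x, y}"
    using is_graph_edgeE[OF g e] by blast
  have "(x, y) \<in> edge_rel (snd G) (fst G)"
    unfolding edge_rel_def using xy e by simp
  then have "component G x = component G y"
    by (simp add: component_eq r_into_rtrancl)
  then have "\<Union>e \<subseteq> component G x"
    using vertex_subset_component[OF xy(1)] vertex_subset_component[OF xy(2)] xy(3) by auto
  then show "\<exists>C\<in>components G. \<Union>e \<subseteq> C"
    unfolding components_def using xy(1) by blast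
qed

lemma connected_on_component:
  assumes g: "is_graph G" and v: "v \<in> fst G"
  shows "connected_on (snd G) {u \<in> fst G. u \<subseteq> component G v}"
proof -
  define W where "W = {u \<in> fst G. u \<subseteq> component G v}"
  have path: "(v, u) \<in> (edge_rel (snd G) W)\<^sup>*" if "(v, u) \<in> (edge_rel (snd G) (fst G))\<^sup>*" for u
    using that
  proof induction
    case (step y z)
    have yz: "y \<in> fst G" "z \<in> fst G" "{y, z} \<in> snd G"
      using step(2) unfolding edge_rel_def by auto
    have "component G v = component G y" "component G v = component G z"
      using component_eq[OF step(1)] component_eq[OF rtrancl_into_rtrancl[OF step(1,2)]] by auto
    then have "(y, z) \<in> edge_rel (snd G) W"
      unfolding W_def edge_rel_def
      using yz vertex_subset_component[OF yz(1)] vertex_subset_component[OF yz(2)] by auto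
    then show ?case
      using step(3) by simp
  qed simp
  have "v \<in> W"
    unfolding W_def using v vertex_subset_component by blast
  moreover have "(v, u) \<in> (edge_rel (snd G) W)\<^sup>*" if "u \<in> W" for u
    using path vertex_in_component[OF g] that unfolding W_def by blast
  ultimately show ?thesis
    unfolding connected_on_iff W_def[symmetric] by (meson edge_rel_rtrancl_sym rtrancl_trans empty_iff)
qed

lemma admissible_components:
  assumes g: "is_graph G"
  shows "admissible (components G) G"
  unfolding admissible_def
  using partition_components[OF g] connected_on_component[OF g] vertex_subset_component
  unfolding components_def by blast

lemma admissible_internal_iff:
  assumes g: "is_graph G" and P: "admissible P G"
  shows "internal P G \<longleftrightarrow> P = components G"
  using admissible_internal_unique[OF g P _ admissible_components[OF g] internal_components[OF g]]
    admissible_internal_unique[OF g admissible_components[OF g] internal_components[OF g] P]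
    internal_components[OF g] by blast

lemma quot_graph_edgeless_iff:
  assumes g: "is_graph G" and P: "admissible P G"
  shows "snd (quot_graph G P) = {} \<longleftrightarrow> internal P G"
proof
  assume i: "internal P G"
  show "snd (quot_graph G P) = {}"
  proof (rule ccontr)
    assume "snd (quot_graph G P) \<noteq> {}"
    then obtain C D v w where c: "C \<in> P" "D \<in> P" "C \<noteq> D" "{v, w} \<in> snd G" "v \<subseteq> C" "w \<subseteq> D"
      by (metis all_not_in_conv quot_graph_edgeE)
    obtain D' where D': "D' \<in> P" "v \<subseteq> D'" "w \<subseteq> D'"
      using internal_edge[OF i c(4)] by blast
    show False
      using admissible_block_unique[OF g P _ c(1) D'(1) c(5) D'(2)]
        admissible_block_unique[OF g P _ c(2) D'(1) c(6) D'(3)]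
        is_graph_edge_vertices[OF g c(4)] c(3) by simp
  qed
next
  assume e: "snd (quot_graph G P) = {}"
  show "internal P G"
    unfolding internal_def
  proof
    fix e assume eE: "e \<in> snd G"
    obtain x y where xy: "x \<in> fst G" "y \<in> fst G" "e = {x, y}"
      using is_graph_edgeE[OF g eE] by blast
    obtain C D where CD: "C \<in> P" "x \<subseteq> C" "D \<in> P" "y \<subseteq> D"
      using admissibleD(2)[OF P] xy by meson
    have "C = D"
      using quot_graph_edgeI[OF CD(1,3) _ _ CD(2,4), of G] eE xy(3) e by blast
    then show "\<exists>C\<in>P. \<Union>e \<subseteq> C"
      using CD xy(3) by auto
  qed
qed

lemma quot_graph_components:
  assumes "is_graph G"
  shows "quot_graph G (components G) = (components G, {})"
  using quot_graph_edgeless_iff[OF assms admissible_components] internal_components assms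
  by (simp add: prod_eq_iff)

lemma restr_graph_vertices_edgeless:
  assumes g: "is_graph G"
  shows "snd (restr_graph G (fst G)) = {}"
proof -
  have "False" if e: "e \<in> snd G" "C \<in> fst G" "\<Union>e \<subseteq> C" for e C
  proof -
    obtain x y where "x \<in> fst G" "y \<in> fst G" "x \<noteq> y" "e = {x, y}"
      using g e(1) by (rule is_graph_edgeE)
    then show False
      using is_graph_vertex_subset_eq[OF g _ e(2)] e(3) by auto
  qed
  then show ?thesis
    unfolding restr_graph_def by auto
qed

lemma admissible_restr_edgeless_imp_vertices:
  assumes g: "is_graph G" and P: "admissible P G" and e: "snd (restr_graph G P) = {}"
  shows "P = fst G"
proof -
  have block_vertex: "C \<in> fst G" if C: "C \<in> P" for C
  proof -
    have no_edge: "{x, y} \<notin> snd G" if "x \<subseteq> C" "y \<subseteq> C" for x y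
      using e C that unfolding restr_graph_def by auto
    obtain D where D: "D \<in> fst G" "\<Union>{v \<in> fst G. v \<subseteq> C} \<subseteq> D"
      using connected_on_within_block[OF g is_graphD(2)[OF g] _ admissibleD(3)[OF P C]] no_edge
      by blast
    have CD: "C \<subseteq> D"
      using D(2) admissible_block_eq_Union[OF g P C] by auto
    obtain u where u: "u \<in> fst G" "u \<subseteq> C"
      using connected_on_nonempty[OF admissibleD(3)[OF P C]] by blast
    have "u = D"
      using is_graph_vertex_subset_eq[OF g u(1) D(1)] u(2) CD by auto
    then show ?thesis
      using CD u(2) D(1) by auto
  qed
  have "v \<in> P" if v: "v \<in> fst G" for v
  proof -
    obtain C where C: "C \<in> P" "v \<subseteq> C"
      using admissibleD(2)[OF P v] by blast
    then show ?thesis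
      using is_graph_vertex_subset_eq[OF g v block_vertex[OF C(1)]] by simp
  qed
  then show ?thesis
    using block_vertex by blast
qed

lemma quot_graph_vertices:
  assumes g: "is_graph G"
  shows "quot_graph G (fst G) = G"
proof -
  have "snd (quot_graph G (fst G)) \<subseteq> snd G"
  proof
    fix e assume "e \<in> snd (quot_graph G (fst G))"
    then obtain C D v w where c: "e = {C, D}" "C \<in> fst G" "D \<in> fst G" "{v, w} \<in> snd G" "v \<subseteq> C" "w \<subseteq> D"
      by (rule quot_graph_edgeE)
    then show "e \<in> snd G"
      using is_graph_vertex_subset_eq[OF g _ c(2) c(5)] is_graph_vertex_subset_eq[OF g _ c(3) c(6)]
        is_graph_edge_vertices[OF g c(4)] by simp
  qed
  moreover have "e \<in> snd (quot_graph G (fst G))" if e: "e \<in> snd G" for e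
  proof -
    obtain v w where "v \<in> fst G" "w \<in> fst G" "v \<noteq> w" "e = {v, w}"
      using g e by (rule is_graph_edgeE)
    then show ?thesis
      using quot_graph_edgeI[OF _ _ _ _ order_refl order_refl] e by blast
  qed
  ultimately show ?thesis
    by (auto simp: prod_eq_iff)
qed

section \<open>The unit \<open>eps'\<close>\<close>

lemma char_prod_eps'_right:
  assumes g: "is_graph G"
  shows "char_prod f eps' G = f G"
proof -
  have "char_prod f eps' G = (\<Sum>P\<in>{fst G}. f (quot_graph G P) * eps' (restr_graph G P))"
    unfolding char_prod_def
    by (rule sum.mono_neutral_right[OF finite_admissible[OF g]])
      (use admissible_vertices[OF g] admissible_restr_edgeless_imp_vertices[OF g] in
        \<open>auto simp: eps'_def\<close>)
  then show ?thesis
    using quot_graph_vertices[OF g] restr_graph_vertices_edgeless[OF g] by (simp add: eps'_def)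
qed

lemma char_prod_eps'_left:
  assumes g: "is_graph G"
  shows "char_prod eps' f G = f G"
proof -
  have "char_prod eps' f G = (\<Sum>P\<in>{components G}. eps' (quot_graph G P) * f (restr_graph G P))"
    unfolding char_prod_def
    by (rule sum.mono_neutral_right[OF finite_admissible[OF g]])
      (use admissible_components[OF g] quot_graph_edgeless_iff[OF g] admissible_internal_iff[OF g] in
        \<open>auto simp: eps'_def\<close>)
  then show ?thesis
    using quot_graph_components[OF g] restr_graph_internal[OF internal_components[OF g]]
    by (simp add: eps'_def)
qed

section \<open>Associativity\<close>

definition refines :: "nat set set \<Rightarrow> nat set set \<Rightarrow> bool" where
  "refines P Q \<longleftrightarrow> (\<forall>C\<in>P. \<exists>D\<in>Q. C \<subseteq> D)"

lemma refines_block_subset: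
  assumes g: "is_graph G" and P: "admissible P G" and Q: "partition_of Q (\<Union>(fst G))"
    and PQ: "refines P Q" and v: "v \<in> fst G" "v \<subseteq> C" "C \<in> P" "v \<subseteq> D" "D \<in> Q"
  shows "C \<subseteq> D"
proof -
  obtain D' where D': "D' \<in> Q" "C \<subseteq> D'"
    using PQ v(3) unfolding refines_def by blast
  have "D' = D"
    using partition_of_subset_block_eq[OF Q D'(1) v(5) _ v(4) is_graph_vertex_nonempty[OF g v(1)]]
      v(2) D'(2) by auto
  then show ?thesis
    using D' by simp
qed

lemma vertices_below_block:
  assumes g: "is_graph G" and P: "admissible P G" and Q: "partition_of Q (\<Union>(fst G))"
    and PQ: "refines P Q" and D: "D \<in> Q"
  shows "{v \<in> fst G. v \<subseteq> D} = {v \<in> fst G. \<exists>C\<in>{C \<in> P. C \<subseteq> D}. v \<subseteq> C}"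
proof (intro set_eqI iffI)
  fix v assume v: "v \<in> {v \<in> fst G. v \<subseteq> D}"
  then obtain C where "C \<in> P" "v \<subseteq> C"
    using admissibleD(2)[OF P] by blast
  then show "v \<in> {v \<in> fst G. \<exists>C\<in>{C \<in> P. C \<subseteq> D}. v \<subseteq> C}"
    using refines_block_subset[OF g P Q PQ _ _ _ _ D] v by blast
qed auto

text \<open>Within a block of the admissible partition P one can move freely because the block is
  connected; this lets paths of G / P be lifted to G.\<close>
lemma quot_path_lift:
  assumes g: "is_graph G" and P: "admissible P G" and W': "W' \<subseteq> P"
    and p: "(C, C') \<in> (edge_rel (snd (quot_graph G P)) W')\<^sup>*"
    and C: "C \<in> W'" and a: "a \<in> fst G" "a \<subseteq> C" and u: "u \<in> fst G" "u \<subseteq> C'"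
  shows "(a, u) \<in> (edge_rel (snd G) {v \<in> fst G. \<exists>C\<in>W'. v \<subseteq> C})\<^sup>*"
  using p u
proof (induction arbitrary: u)
  case base
  have "{v \<in> fst G. v \<subseteq> C} \<subseteq> {v \<in> fst G. \<exists>C\<in>W'. v \<subseteq> C}"
    using C by blast
  then show ?case
    by (rule edge_rel_rtrancl_mono)
      (rule connected_on_rtrancl[OF admissibleD(3)[OF P]]; use C W' a base in auto)
next
  case (step C1 C2)
  have c12: "C1 \<in> W'" "C2 \<in> W'" "{C1, C2} \<in> snd (quot_graph G P)"
    using step(2) unfolding edge_rel_def by auto
  obtain x y where xy: "{x, y} \<in> snd G" "x \<subseteq> C1" "y \<subseteq> C2"
    using c12(3) by (rule quot_graph_edge_witness)
  have xyV: "x \<in> fst G" "y \<in> fst G"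
    using is_graph_edge_vertices[OF g xy(1)] by auto
  have "{v \<in> fst G. v \<subseteq> C2} \<subseteq> {v \<in> fst G. \<exists>C\<in>W'. v \<subseteq> C}"
    using c12(2) by blast
  then have "(y, u) \<in> (edge_rel (snd G) {v \<in> fst G. \<exists>C\<in>W'. v \<subseteq> C})\<^sup>*"
    by (rule edge_rel_rtrancl_mono)
      (rule connected_on_rtrancl[OF admissibleD(3)[OF P]]; use c12(2) W' xyV(2) xy(3) step(4,5) in auto)
  moreover have "(x, y) \<in> edge_rel (snd G) {v \<in> fst G. \<exists>C\<in>W'. v \<subseteq> C}"
    unfolding edge_rel_def using xy xyV c12 by blast
  ultimately show ?case
    using step(3)[OF xyV(1) xy(2)] by (meson converse_rtrancl_into_rtrancl rtrancl_trans)
qed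

lemma quot_path_project:
  assumes g: "is_graph G" and P: "admissible P G" and W': "W' \<subseteq> P"
    and p: "(a, u) \<in> (edge_rel (snd G) {v \<in> fst G. \<exists>C\<in>W'. v \<subseteq> C})\<^sup>*"
    and a: "a \<in> fst G" "a \<subseteq> C" "C \<in> W'" and u: "u \<in> fst G" "u \<subseteq> C'" "C' \<in> W'"
  shows "(C, C') \<in> (edge_rel (snd (quot_graph G P)) W')\<^sup>*"
proof -
  define block where "block v = (SOME C. C \<in> P \<and> v \<subseteq> C)" for v
  have block: "block v \<in> P \<and> v \<subseteq> block v" if "v \<in> fst G" for v
    unfolding block_def by (rule someI_ex) (use admissibleD(2)[OF P that] in blast)
  have block_eq: "block v = B" if "v \<in> fst G" "v \<subseteq> B" "B \<in> W'" for v B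
    using admissible_block_unique[OF g P that(1) _ _ _ that(2)] block[OF that(1)] that(3) W' by blast
  have project_edge: "(block x, block y) \<in> (edge_rel (snd (quot_graph G P)) W')\<^sup>*"
    if "(x, y) \<in> edge_rel (snd G) {v \<in> fst G. \<exists>C\<in>W'. v \<subseteq> C}" for x y
  proof -
    have xy: "x \<in> fst G" "y \<in> fst G" "{x, y} \<in> snd G" "block x \<in> W'" "block y \<in> W'"
      using that block_eq unfolding edge_rel_def by auto
    have "{block x, block y} \<in> snd (quot_graph G P)" if "block x \<noteq> block y"
      using quot_graph_edgeI[OF _ _ that xy(3)] block[OF xy(1)] block[OF xy(2)] by blast
    then show ?thesis
      using xy(4,5) unfolding edge_rel_def by (cases "block x = block y") auto
  qed
  have "(block a, block u) \<in> (edge_rel (snd (quot_graph G P)) W')\<^sup>*"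
    using rtrancl_image_hom[OF p project_edge] .
  then show ?thesis
    using block_eq a u by simp
qed

lemma admissible_quot_refines: "admissible Q (quot_graph G P) \<Longrightarrow> refines P Q"
  unfolding refines_def using admissibleD(2)[of Q "quot_graph G P"] by simp

lemma admissible_quot_partition:
  assumes "admissible P G" "admissible Q (quot_graph G P)"
  shows "partition_of Q (\<Union>(fst G))"
  using admissibleD(1)[OF assms(2)] partition_of_Union[OF admissibleD(1)[OF assms(1)]] by simp

lemma admissible_of_admissible_quot:
  assumes g: "is_graph G" and P: "admissible P G" and Q: "admissible Q (quot_graph G P)"
  shows "admissible Q G"
  unfolding admissible_def
proof (intro conjI ballI)
  have Qp: "partition_of Q (\<Union>(fst G))" and PQ: "refines P Q"
    using admissible_quot_partition[OF P Q] admissible_quot_refines[OF Q] .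
  then show "partition_of Q (\<Union>(fst G))" by blast
  show "\<exists>D\<in>Q. v \<subseteq> D" if v: "v \<in> fst G" for v
  proof -
    obtain C D where "C \<in> P" "v \<subseteq> C" "D \<in> Q" "C \<subseteq> D"
      using admissibleD(2)[OF P v] PQ unfolding refines_def by meson
    then show ?thesis
      by blast
  qed
  fix D assume D: "D \<in> Q"
  define W' where "W' = {C \<in> P. C \<subseteq> D}"
  have conn: "connected_on (snd (quot_graph G P)) W'"
    using admissibleD(3)[OF Q D] unfolding W'_def by simp
  have nonempty: "{v \<in> fst G. v \<subseteq> C} \<noteq> {}" if "C \<in> P" for C
    using connected_on_nonempty[OF admissibleD(3)[OF P that]] .
  show "connected_on (snd G) {v \<in> fst G. v \<subseteq> D}"
    unfolding vertices_below_block[OF g P Qp PQ D] W'_def[symmetric] connected_on_iff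
  proof (intro conjI ballI)
    show "{v \<in> fst G. \<exists>C\<in>W'. v \<subseteq> C} \<noteq> {}"
      using connected_on_nonempty[OF conn] nonempty unfolding W'_def by blast
    fix a b assume "a \<in> {v \<in> fst G. \<exists>C\<in>W'. v \<subseteq> C}" "b \<in> {v \<in> fst G. \<exists>C\<in>W'. v \<subseteq> C}"
    then show "(a, b) \<in> (edge_rel (snd G) {v \<in> fst G. \<exists>C\<in>W'. v \<subseteq> C})\<^sup>*"
      using quot_path_lift[OF g P _ connected_on_rtrancl[OF conn]] unfolding W'_def by blast
  qed
qed

lemma admissible_restr_of_refines:
  assumes P: "admissible P G" and PQ: "refines P Q"
  shows "admissible P (restr_graph G Q)"
  unfolding admissible_def fst_restr_graph
proof (intro conjI ballI)
  show "partition_of P (\<Union>(fst G))"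
    using admissibleD(1)[OF P] .
  show "\<exists>C\<in>P. v \<subseteq> C" if "v \<in> fst G" for v
    using admissibleD(2)[OF P that] .
  fix C assume C: "C \<in> P"
  obtain D where D: "D \<in> Q" "C \<subseteq> D"
    using PQ C unfolding refines_def by blast
  have "{x, y} \<in> snd (restr_graph G Q)"
    if "x \<in> {v \<in> fst G. v \<subseteq> C}" "y \<in> {v \<in> fst G. v \<subseteq> C}" "{x, y} \<in> snd G" for x y
    unfolding restr_graph_edge_iff using that D by auto
  then show "connected_on (snd (restr_graph G Q)) {v \<in> fst G. v \<subseteq> C}"
    by (rule connected_on_mono_edges[OF admissibleD(3)[OF P C]])
qed

lemma admissible_of_admissible_restr:
  assumes P: "admissible P (restr_graph G Q)"
  shows "admissible P G"
  unfolding admissible_def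
proof (intro conjI ballI)
  show "partition_of P (\<Union>(fst G))"
    using admissibleD(1)[OF P] by simp
  show "\<exists>C\<in>P. v \<subseteq> C" if "v \<in> fst G" for v
    using admissibleD(2)[OF P] that by simp
  fix C assume "C \<in> P"
  then have "connected_on (snd (restr_graph G Q)) {v \<in> fst G. v \<subseteq> C}"
    using admissibleD(3)[OF P] by simp
  then show "connected_on (snd G) {v \<in> fst G. v \<subseteq> C}"
    by (rule connected_on_mono_edges) (use restr_graph_edges_subset[of G Q] in auto)
qed

lemma admissible_restr_refines:
  assumes g: "is_graph G" and Q: "admissible Q G" and P: "admissible P (restr_graph G Q)"
  shows "refines P Q"
  unfolding refines_def
proof
  fix C assume C: "C \<in> P"
  have "\<exists>D\<in>Q. \<Union>{v \<in> fst G. v \<subseteq> C} \<subseteq> D"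
    by (rule connected_on_within_block[OF g admissibleD(1,2)[OF Q]])
      (use admissibleD(3)[OF P C] in \<open>auto simp: restr_graph_edge_iff\<close>)
  then show "\<exists>D\<in>Q. C \<subseteq> D"
    using admissible_block_eq_Union[OF g admissible_of_admissible_restr[OF P] C] by auto
qed

lemma admissible_quot_of_admissible_restr:
  assumes g: "is_graph G" and Q: "admissible Q G" and P: "admissible P (restr_graph G Q)"
  shows "admissible Q (quot_graph G P)"
  unfolding admissible_def fst_quot_graph
proof (intro conjI ballI)
  have PG: "admissible P G" and PQ: "refines P Q" and Qp: "partition_of Q (\<Union>(fst G))"
    using admissible_of_admissible_restr[OF P] admissible_restr_refines[OF g Q P] admissibleD(1)[OF Q] .
  then show "partition_of Q (\<Union>P)"
    using partition_of_Union[OF admissibleD(1)[OF PG]] by auto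
  show "\<exists>D\<in>Q. C \<subseteq> D" if "C \<in> P" for C
    using PQ that unfolding refines_def by blast
  fix D assume D: "D \<in> Q"
  define W' where "W' = {C \<in> P. C \<subseteq> D}"
  have conn: "connected_on (snd G) {v \<in> fst G. \<exists>C\<in>W'. v \<subseteq> C}"
    using admissibleD(3)[OF Q D] unfolding vertices_below_block[OF g PG Qp PQ D] W'_def .
  have vertex: "\<exists>v\<in>fst G. v \<subseteq> C" if "C \<in> P" for C
    using connected_on_nonempty[OF admissibleD(3)[OF PG that]] by blast
  show "connected_on (snd (quot_graph G P)) {C \<in> P. C \<subseteq> D}"
    unfolding W'_def[symmetric] connected_on_iff
  proof (intro conjI ballI)
    show "W' \<noteq> {}"
      using connected_on_nonempty[OF conn] by auto
    fix C1 C2 assume C: "C1 \<in> W'" "C2 \<in> W'"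
    have "C1 \<in> P" "C2 \<in> P"
      using C unfolding W'_def by auto
    then obtain v1 v2 where v: "v1 \<in> fst G" "v1 \<subseteq> C1" "v2 \<in> fst G" "v2 \<subseteq> C2"
      using vertex by meson
    have path: "(v1, v2) \<in> (edge_rel (snd G) {v \<in> fst G. \<exists>C\<in>W'. v \<subseteq> C})\<^sup>*"
      by (rule connected_on_rtrancl[OF conn]) (use v C in auto)
    show "(C1, C2) \<in> (edge_rel (snd (quot_graph G P)) W')\<^sup>*"
      by (rule quot_path_project[OF g PG _ path v(1,2) C(1) v(3,4) C(2)]) (auto simp: W'_def)
  qed
qed

lemma admissible_quot_iff_admissible_restr:
  assumes g: "is_graph G"
  shows "admissible P G \<and> admissible Q (quot_graph G P) \<longleftrightarrow> admissible Q G \<and> admissible P (restr_graph G Q)"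
  using admissible_of_admissible_quot[OF g] admissible_restr_of_refines admissible_quot_refines
    admissible_of_admissible_restr admissible_quot_of_admissible_restr[OF g] by blast

lemma quot_graph_quot_graph_edge_iff:
  assumes g: "is_graph G" and P: "admissible P G" and Q: "partition_of Q (\<Union>(fst G))"
    and PQ: "refines P Q" and D: "D1 \<in> Q" "D2 \<in> Q" "D1 \<noteq> D2"
  shows "(\<exists>v w. {v, w} \<in> snd (quot_graph G P) \<and> v \<subseteq> D1 \<and> w \<subseteq> D2) \<longleftrightarrow>
         (\<exists>v w. {v, w} \<in> snd G \<and> v \<subseteq> D1 \<and> w \<subseteq> D2)"
proof
  assume "\<exists>v w. {v, w} \<in> snd (quot_graph G P) \<and> v \<subseteq> D1 \<and> w \<subseteq> D2"
  then obtain C1 C2 where c: "{C1, C2} \<in> snd (quot_graph G P)" "C1 \<subseteq> D1" "C2 \<subseteq> D2"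
    by blast
  obtain x y where "{x, y} \<in> snd G" "x \<subseteq> C1" "y \<subseteq> C2"
    using c(1) by (rule quot_graph_edge_witness)
  then show "\<exists>v w. {v, w} \<in> snd G \<and> v \<subseteq> D1 \<and> w \<subseteq> D2"
    using c(2,3) by blast
next
  assume "\<exists>v w. {v, w} \<in> snd G \<and> v \<subseteq> D1 \<and> w \<subseteq> D2"
  then obtain v w where vw: "{v, w} \<in> snd G" "v \<subseteq> D1" "w \<subseteq> D2"
    by blast
  have vwV: "v \<in> fst G" "w \<in> fst G"
    using is_graph_edge_vertices[OF g vw(1)] by auto
  obtain Cv Cw where C: "Cv \<in> P" "v \<subseteq> Cv" "Cw \<in> P" "w \<subseteq> Cw"
    using admissibleD(2)[OF P] vwV by meson
  have sub: "Cv \<subseteq> D1" "Cw \<subseteq> D2"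
    using refines_block_subset[OF g P Q PQ vwV(1) C(2,1) vw(2) D(1)]
      refines_block_subset[OF g P Q PQ vwV(2) C(4,3) vw(3) D(2)] .
  have "Cv \<noteq> Cw"
    using partition_of_subset_block_eq[OF Q D(1,2) sub(1)] sub(2) D(3)
      partition_of_nonempty[OF admissibleD(1)[OF P] C(1)] by auto
  then have "{Cv, Cw} \<in> snd (quot_graph G P)"
    using quot_graph_edgeI[OF C(1,3) _ vw(1) C(2,4)] by simp
  then show "\<exists>v w. {v, w} \<in> snd (quot_graph G P) \<and> v \<subseteq> D1 \<and> w \<subseteq> D2"
    using sub by blast
qed

lemma quot_graph_quot_graph:
  assumes g: "is_graph G" and P: "admissible P G" and Q: "partition_of Q (\<Union>(fst G))"
    and PQ: "refines P Q"
  shows "quot_graph (quot_graph G P) Q = quot_graph G Q"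
proof -
  have "e \<in> snd (quot_graph (quot_graph G P) Q) \<longleftrightarrow> e \<in> snd (quot_graph G Q)" for e
  proof
    assume "e \<in> snd (quot_graph (quot_graph G P) Q)"
    then obtain D1 D2 v w where c: "e = {D1, D2}" "D1 \<in> Q" "D2 \<in> Q" "D1 \<noteq> D2"
      "{v, w} \<in> snd (quot_graph G P)" "v \<subseteq> D1" "w \<subseteq> D2"
      by (rule quot_graph_edgeE)
    then obtain x y where "{x, y} \<in> snd G" "x \<subseteq> D1" "y \<subseteq> D2"
      using quot_graph_quot_graph_edge_iff[OF g P Q PQ c(2-4)] by blast
    then show "e \<in> snd (quot_graph G Q)"
      using quot_graph_edgeI[OF c(2-4)] c(1) by blast
  next
    assume "e \<in> snd (quot_graph G Q)"
    then obtain D1 D2 v w where c: "e = {D1, D2}" "D1 \<in> Q" "D2 \<in> Q" "D1 \<noteq> D2"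
      "{v, w} \<in> snd G" "v \<subseteq> D1" "w \<subseteq> D2"
      by (rule quot_graph_edgeE)
    then obtain x y where "{x, y} \<in> snd (quot_graph G P)" "x \<subseteq> D1" "y \<subseteq> D2"
      using quot_graph_quot_graph_edge_iff[OF g P Q PQ c(2-4)] by blast
    then show "e \<in> snd (quot_graph (quot_graph G P) Q)"
      using quot_graph_edgeI[OF c(2-4)] c(1) by blast
  qed
  then show ?thesis
    by (auto simp: prod_eq_iff)
qed

lemma restr_graph_quot_graph:
  assumes g: "is_graph G" and P: "admissible P G" and Q: "partition_of Q (\<Union>(fst G))"
    and PQ: "refines P Q"
  shows "restr_graph (quot_graph G P) Q = quot_graph (restr_graph G Q) P"
proof -
  have "e \<in> snd (restr_graph (quot_graph G P) Q) \<longleftrightarrow> e \<in> snd (quot_graph (restr_graph G Q) P)" for e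
  proof
    assume "e \<in> snd (restr_graph (quot_graph G P) Q)"
    then obtain D where e: "e \<in> snd (quot_graph G P)" "D \<in> Q" "\<Union>e \<subseteq> D"
      unfolding restr_graph_edge_iff by blast
    obtain C1 C2 v w where c: "e = {C1, C2}" "C1 \<in> P" "C2 \<in> P" "C1 \<noteq> C2"
        "{v, w} \<in> snd G" "v \<subseteq> C1" "w \<subseteq> C2"
      using e(1) by (rule quot_graph_edgeE)
    have "\<Union>{v, w} \<subseteq> D"
      using c(1,6,7) e(3) by auto
    then have "{v, w} \<in> snd (restr_graph G Q)"
      unfolding restr_graph_edge_iff using c(5) e(2) by blast
    then show "e \<in> snd (quot_graph (restr_graph G Q) P)"
      using quot_graph_edgeI[OF c(2-4) _ c(6,7)] c(1) by simp
  next
    assume "e \<in> snd (quot_graph (restr_graph G Q) P)"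
    then obtain C1 C2 v w where c: "e = {C1, C2}" "C1 \<in> P" "C2 \<in> P" "C1 \<noteq> C2"
        "{v, w} \<in> snd (restr_graph G Q)" "v \<subseteq> C1" "w \<subseteq> C2"
      by (rule quot_graph_edgeE)
    obtain D where vw: "{v, w} \<in> snd G" "D \<in> Q" "v \<subseteq> D" "w \<subseteq> D"
      using c(5) unfolding restr_graph_edge_iff by auto
    have vwV: "v \<in> fst G" "w \<in> fst G"
      using is_graph_edge_vertices[OF g vw(1)] by auto
    have "C1 \<subseteq> D" "C2 \<subseteq> D"
      using refines_block_subset[OF g P Q PQ vwV(1) c(6,2) vw(3,2)]
        refines_block_subset[OF g P Q PQ vwV(2) c(7,3) vw(4,2)] .
    moreover have "e \<in> snd (quot_graph G P)"
      using quot_graph_edgeI[OF c(2-4) vw(1) c(6,7)] c(1) by simp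
    ultimately show "e \<in> snd (restr_graph (quot_graph G P) Q)"
      unfolding restr_graph_edge_iff using vw(2) c(1) by auto
  qed
  then show ?thesis
    by (auto simp: prod_eq_iff)
qed

lemma restr_graph_restr_graph:
  assumes "refines P Q"
  shows "restr_graph (restr_graph G Q) P = restr_graph G P"
proof -
  have "(\<exists>C\<in>P. \<Union>e \<subseteq> C) \<Longrightarrow> (\<exists>D\<in>Q. \<Union>e \<subseteq> D)" for e :: "nat set set"
    using assms unfolding refines_def by (meson order_trans)
  then show ?thesis
    unfolding restr_graph_def by auto
qed

lemma char_prod_assoc:
  assumes g: "is_graph G"
  shows "char_prod (char_prod a b) c G = char_prod a (char_prod b c) G"
proof -
  define F where "F P Q = a (quot_graph G Q) * b (quot_graph (restr_graph G Q) P) * c (restr_graph G P)"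
    for P Q
  define AG where "AG = {P. admissible P G}"
  have left: "char_prod a b (quot_graph G P) * c (restr_graph G P)
      = (\<Sum>Q\<in>{Q \<in> AG. admissible Q (quot_graph G P)}. F P Q)" if P: "P \<in> AG" for P
  proof -
    have "{Q. admissible Q (quot_graph G P)} = {Q \<in> AG. admissible Q (quot_graph G P)}"
      using admissible_of_admissible_quot[OF g] P unfolding AG_def by blast
    moreover have "a (quot_graph (quot_graph G P) Q) * b (restr_graph (quot_graph G P) Q) =
        a (quot_graph G Q) * b (quot_graph (restr_graph G Q) P)"
      if Q: "admissible Q (quot_graph G P)" for Q
      using quot_graph_quot_graph[OF g _ admissible_quot_partition admissible_quot_refines[OF Q]]
        restr_graph_quot_graph[OF g _ admissible_quot_partition admissible_quot_refines[OF Q]] P Q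
      unfolding AG_def by simp
    ultimately show ?thesis
      unfolding char_prod_def[of a b] sum_distrib_right F_def by (intro sum.cong) auto
  qed
  have right: "a (quot_graph G Q) * char_prod b c (restr_graph G Q)
      = (\<Sum>P\<in>{P \<in> AG. admissible Q (quot_graph G P)}. F P Q)" if Q: "Q \<in> AG" for Q
  proof -
    have "{P \<in> AG. admissible Q (quot_graph G P)} = {P. admissible P (restr_graph G Q)}"
      using admissible_quot_iff_admissible_restr[OF g] Q unfolding AG_def by blast
    moreover have "restr_graph (restr_graph G Q) P = restr_graph G P"
      if "admissible P (restr_graph G Q)" for P
      using restr_graph_restr_graph[OF admissible_restr_refines[OF g _ that]] Q unfolding AG_def by simp
    ultimately show ?thesis
      unfolding char_prod_def[of b c] sum_distrib_left F_def by (intro sum.cong) (auto simp: mult.assoc)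
  qed
  have "char_prod (char_prod a b) c G = (\<Sum>P\<in>AG. \<Sum>Q\<in>{Q \<in> AG. admissible Q (quot_graph G P)}. F P Q)"
    using left unfolding char_prod_def[of "char_prod a b"] AG_def[symmetric] by simp
  also have "\<dots> = (\<Sum>Q\<in>AG. \<Sum>P\<in>{P \<in> AG. admissible Q (quot_graph G P)}. F P Q)"
    using sum.swap_restrict[OF finite_admissible[OF g] finite_admissible[OF g]] unfolding AG_def .
  also have "\<dots> = char_prod a (char_prod b c) G"
    using right unfolding char_prod_def[of a] AG_def[symmetric] by simp
  finally show ?thesis .
qed

section \<open>The right inverse of a character\<close>

definition nonzero_on_bullets :: "(graph \<Rightarrow> 'k::field) \<Rightarrow> bool" where
  "nonzero_on_bullets lam \<longleftrightarrow> (\<forall>A. finite A \<and> A \<noteq> {} \<longrightarrow> lam (bullet A) \<noteq> 0)"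

lemma characterD:
  assumes "character lam"
  shows "\<And>G f. is_graph G \<Longrightarrow> inj_on f (\<Union>(fst G)) \<Longrightarrow> lam (map_graph f G) = lam G"
    "\<And>G H. is_graph G \<Longrightarrow> is_graph H \<Longrightarrow> \<Union>(fst G) \<inter> \<Union>(fst H) = {} \<Longrightarrow>
            lam (graph_union G H) = lam G * lam H"
    "lam empty_graph = 1"
  using assms unfolding character_def by blast+

text \<open>An edgeless graph is the disjoint union of the one-vertex graphs on its vertices.\<close>
lemma character_edgeless_nonzero:
  assumes ch: "character lam" and nz: "nonzero_on_bullets lam"
  shows "finite P \<Longrightarrow> \<forall>B\<in>P. finite B \<Longrightarrow> partition_of P (\<Union>P) \<Longrightarrow> lam (P, {}) \<noteq> 0"
proof (induction P rule: finite_induct)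
  case empty
  then show ?case
    using characterD(3)[OF ch] unfolding empty_graph_def by simp
next
  case (insert C P)
  have C: "finite C" "C \<noteq> {}"
    using insert.prems partition_of_nonempty by auto
  have "C \<inter> B = {}" if "B \<in> P" for B
    using partition_of_disjoint[OF insert.prems(2), of C B] that insert.hyps(2) by auto
  then have CP: "C \<inter> \<Union>P = {}"
    by blast
  have P: "partition_of P (\<Union>P)"
    using insert.prems(2) unfolding partition_of_def by simp
  have "lam (insert C P, {}) = lam (bullet C) * lam (P, {})"
    using characterD(2)[OF ch is_graph_bullet[OF C] is_graph_edgeless[OF insert.hyps(1) _ P]]
      insert.prems(1) CP unfolding graph_union_def bullet_def by simp
  then show ?case
    using nz C insert.IH[OF _ P] insert.prems(1) unfolding nonzero_on_bullets_def by simp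
qed

lemma character_quot_components_nonzero:
  assumes ch: "character lam" and nz: "nonzero_on_bullets lam" and g: "is_graph G"
  shows "lam (quot_graph G (components G)) \<noteq> 0"
proof -
  have K: "partition_of (components G) (\<Union>(components G))"
    using partition_components[OF g] partition_of_Union[OF partition_components[OF g]] by simp
  have "finite (\<Union>(components G))"
    using partition_of_Union[OF partition_components[OF g]] is_graphD(1)[OF g] by simp
  then show ?thesis
    unfolding quot_graph_components[OF g]
    by (intro character_edgeless_nonzero[OF ch nz _ _ K]) (auto intro: finite_UnionD finite_subset)
qed

text \<open>In \<open>char_prod lam mu G = eps' G\<close> the term of the partition into components is
  \<open>lam (G / components G) * mu G\<close>, and every other term evaluates \<open>mu\<close> on a graph with
  fewer edges, so the equation determines \<open>mu\<close> by recursion on the number of edges.\<close>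
function char_rinv :: "(graph \<Rightarrow> 'k::field) \<Rightarrow> graph \<Rightarrow> 'k" where
  "char_rinv lam G = (if is_graph G then
     (eps' G - (\<Sum>P\<in>{P. admissible P G \<and> \<not> internal P G}.
                  lam (quot_graph G P) * char_rinv lam (restr_graph G P)))
       / lam (quot_graph G (components G))
   else 0)"
  by auto
termination
  by (relation "measure (\<lambda>(lam, G). card (snd G))") (auto intro: card_restr_edges_less)

declare char_rinv.simps [simp del]

lemma sum_admissible_split:
  assumes g: "is_graph G"
  shows "(\<Sum>P\<in>{P. admissible P G}. h P) = h (components G) + (\<Sum>P\<in>{P. admissible P G \<and> \<not> internal P G}. h P)"
proof -
  have "{P. admissible P G} - {components G} = {P. admissible P G \<and> \<not> internal P G}"
    using admissible_internal_iff[OF g] by blast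
  then show ?thesis
    using sum.remove[OF finite_admissible[OF g] _, of "components G" h] admissible_components[OF g]
    by simp
qed

lemma char_prod_split:
  assumes g: "is_graph G"
  shows "char_prod lam mu G = lam (quot_graph G (components G)) * mu G
    + (\<Sum>P\<in>{P. admissible P G \<and> \<not> internal P G}. lam (quot_graph G P) * mu (restr_graph G P))"
  unfolding char_prod_def sum_admissible_split[OF g]
    restr_graph_internal[OF internal_components[OF g]] ..

lemma char_prod_char_rinv:
  assumes ch: "character lam" and nz: "nonzero_on_bullets lam" and g: "is_graph G"
  shows "char_prod lam (char_rinv lam) G = eps' G"
  using character_quot_components_nonzero[OF ch nz g]
  by (simp add: char_prod_split[OF g] char_rinv.simps[of lam G] g)

lemma char_rinv_unique:
  assumes ch: "character lam" and nz: "nonzero_on_bullets lam" and g: "is_graph G"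
    and eq: "char_prod lam nu G = eps' G"
    and lower: "\<And>P. admissible P G \<Longrightarrow> \<not> internal P G \<Longrightarrow> nu (restr_graph G P) = char_rinv lam (restr_graph G P)"
  shows "nu G = char_rinv lam G"
proof -
  define S where "S = (\<Sum>P\<in>{P. admissible P G \<and> \<not> internal P G}.
    lam (quot_graph G P) * char_rinv lam (restr_graph G P))"
  have "lam (quot_graph G (components G)) * nu G + S = eps' G"
    using eq lower unfolding char_prod_split[OF g] S_def by simp
  moreover have "lam (quot_graph G (components G)) * char_rinv lam G + S = eps' G"
    using char_prod_char_rinv[OF ch nz g] unfolding char_prod_split[OF g] S_def .
  ultimately have "lam (quot_graph G (components G)) * nu G = lam (quot_graph G (components G)) * char_rinv lam G"
    by (metis add_right_cancel)
  then show ?thesis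
    using character_quot_components_nonzero[OF ch nz g] by simp
qed

lemma char_rinv_edgeless:
  assumes g: "is_graph G" and e: "snd G = {}"
  shows "char_rinv lam G = 1 / lam (components G, {})"
proof -
  have none: "{P. admissible P G \<and> \<not> internal P G} = {}"
    unfolding internal_def using e by simp
  show ?thesis
    using quot_graph_components[OF g] e g unfolding char_rinv.simps[of lam G] none
    by (simp add: eps'_def)
qed

lemma components_bullet: "components (bullet A) = {A}"
  unfolding components_def component_def bullet_def by auto

lemma char_rinv_bullet:
  assumes "finite A" "A \<noteq> {}"
  shows "char_rinv lam (bullet A) = 1 / lam (bullet A)"
  using char_rinv_edgeless[OF is_graph_bullet[OF assms]] components_bullet
  unfolding bullet_def by simp

lemma char_rinv_empty_graph:
  assumes "character lam"
  shows "char_rinv lam empty_graph = 1"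
proof -
  have "is_graph empty_graph" "components empty_graph = {}"
    unfolding empty_graph_def is_graph_def partition_of_def components_def by simp_all
  then show ?thesis
    using char_rinv_edgeless[of empty_graph lam] characterD(3)[OF assms]
    unfolding empty_graph_def by simp
qed

section \<open>Invariance under relabelling\<close>

lemma fst_map_graph: "fst (map_graph f G) = (`) f ` fst G"
  unfolding map_graph_def by simp

lemma snd_map_graph: "snd (map_graph f G) = (`) ((`) f) ` snd G"
  unfolding map_graph_def by simp

lemma Union_fst_map_graph: "\<Union>(fst (map_graph f G)) = f ` \<Union>(fst G)"
  unfolding fst_map_graph by blast

lemma map_graph_map_graph: "map_graph g (map_graph f G) = map_graph (g \<circ> f) G"
  unfolding map_graph_def by (simp add: image_image image_comp)

lemma map_graph_cong:
  assumes g: "is_graph G" and eq: "\<And>x. x \<in> \<Union>(fst G) \<Longrightarrow> f x = h x"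
  shows "map_graph f G = map_graph h G"
proof -
  have v: "f ` v = h ` v" if "v \<in> fst G" for v
    using eq that by (intro image_cong) auto
  have "(`) ((`) f) e = (`) ((`) h) e" if "e \<in> snd G" for e
    using is_graphD(3)[OF g that] v by auto
  then show ?thesis
    unfolding map_graph_def using v by (auto intro: image_cong)
qed

lemma map_graph_inv_into:
  assumes g: "is_graph G" and f: "inj_on f (\<Union>(fst G))"
  shows "map_graph (inv_into (\<Union>(fst G)) f) (map_graph f G) = G"
proof -
  have "map_graph (inv_into (\<Union>(fst G)) f \<circ> f) G = map_graph id G"
    by (rule map_graph_cong[OF g]) (simp add: f)
  then show ?thesis
    unfolding map_graph_map_graph by (simp add: map_graph_def)
qed

lemma map_graph_edgeI: "{x, y} \<in> snd G \<Longrightarrow> {f ` x, f ` y} \<in> snd (map_graph f G)"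
  using imageI[of "{x, y}" "snd G" "(`) ((`) f)"] unfolding snd_map_graph by simp

lemma map_graph_edgeE:
  assumes g: "is_graph G" and e': "{v', w'} \<in> snd (map_graph f G)"
  obtains x y where "{x, y} \<in> snd G" "v' = f ` x" "w' = f ` y"
proof -
  obtain e where e: "e \<in> snd G" "{v', w'} = (`) f ` e"
    using e' unfolding snd_map_graph by blast
  obtain v w where vw: "e = {v, w}"
    using is_graphD(3)[OF g e(1)] by blast
  then have "{v', w'} = {f ` v, f ` w}"
    using e(2) by simp
  then consider "v' = f ` v" "w' = f ` w" | "v' = f ` w" "w' = f ` v"
    unfolding doubleton_eq_iff by blast
  then show ?thesis
  proof cases
    case 1
    then show ?thesis
      using that[of v w] e(1) vw by simp
  next
    case 2
    then show ?thesis
      using that[of w v] e(1) vw by (simp add: insert_commute)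
  qed
qed

lemma is_graph_map_graph:
  assumes g: "is_graph G" and f: "inj_on f (\<Union>(fst G))"
  shows "is_graph (map_graph f G)"
  unfolding is_graph_def Union_fst_map_graph
proof (intro conjI ballI)
  show "finite (f ` \<Union>(fst G))"
    using is_graphD(1)[OF g] by simp
  show "partition_of (fst (map_graph f G)) (f ` \<Union>(fst G))"
    unfolding fst_map_graph by (rule partition_of_image[OF f is_graphD(2)[OF g]])
  fix e' assume "e' \<in> snd (map_graph f G)"
  then obtain e where e: "e \<in> snd G" "e' = (`) f ` e"
    unfolding snd_map_graph by blast
  obtain v w where vw: "v \<in> fst G" "w \<in> fst G" "v \<noteq> w" "e = {v, w}"
    using g e(1) by (rule is_graph_edgeE)
  have "f ` v \<noteq> f ` w"
    using inj_on_image_eq_iff[OF f Union_upper[OF vw(1)] Union_upper[OF vw(2)]] vw(3) by simp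
  moreover have "f ` v \<in> fst (map_graph f G)" "f ` w \<in> fst (map_graph f G)"
    unfolding fst_map_graph using imageI[OF vw(1)] imageI[OF vw(2)] .
  moreover have "e' = {f ` v, f ` w}"
    using e(2) vw(4) by simp
  ultimately show "\<exists>v' w'. v' \<in> fst (map_graph f G) \<and> w' \<in> fst (map_graph f G) \<and> v' \<noteq> w' \<and> e' = {v', w'}"
    by blast
qed

lemma connected_on_image:
  assumes c: "connected_on E W"
    and e: "\<And>x y. x \<in> W \<Longrightarrow> y \<in> W \<Longrightarrow> {x, y} \<in> E \<Longrightarrow> {h x, h y} \<in> E'"
  shows "connected_on E' (h ` W)"
  unfolding connected_on_iff
proof (intro conjI ballI)
  show "h ` W \<noteq> {}"
    using connected_on_nonempty[OF c] by simp
  have step: "(h x, h y) \<in> (edge_rel E' (h ` W))\<^sup>*" if "(x, y) \<in> edge_rel E W" for x y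
    using that e unfolding edge_rel_def by auto
  fix a' b' assume "a' \<in> h ` W" "b' \<in> h ` W"
  then obtain a b where "a \<in> W" "b \<in> W" "a' = h a" "b' = h b"
    by blast
  then show "(a', b') \<in> (edge_rel E' (h ` W))\<^sup>*"
    using rtrancl_image_hom[OF connected_on_rtrancl[OF c] step] by simp
qed

lemma admissible_map_graph:
  assumes g: "is_graph G" and f: "inj_on f (\<Union>(fst G))" and P: "admissible P G"
  shows "admissible ((`) f ` P) (map_graph f G)"
  unfolding admissible_def Union_fst_map_graph
proof (intro conjI ballI)
  show "partition_of ((`) f ` P) (f ` \<Union>(fst G))"
    using partition_of_image[OF f admissibleD(1)[OF P]] .
  show "\<exists>C'\<in>(`) f ` P. v' \<subseteq> C'" if v': "v' \<in> fst (map_graph f G)" for v'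
  proof -
    obtain v where v: "v \<in> fst G" "v' = f ` v"
      using v' unfolding fst_map_graph by (rule imageE)
    obtain C where C: "C \<in> P" "v \<subseteq> C"
      using admissibleD(2)[OF P v(1)] by (rule bexE)
    have "v' \<subseteq> f ` C"
      using v(2) C(2) by (simp add: image_mono)
    then show ?thesis
      using imageI[OF C(1), of "(`) f"] by (rule bexI[where x = "f ` C"])
  qed
  fix C' assume "C' \<in> (`) f ` P"
  then obtain C where C: "C \<in> P" "C' = f ` C"
    by blast
  have "{v' \<in> fst (map_graph f G). v' \<subseteq> C'} = (`) f ` {v \<in> fst G. v \<subseteq> C}"
    unfolding fst_map_graph C(2)
  proof (intro set_eqI iffI)
    fix x' assume "x' \<in> {v' \<in> (`) f ` fst G. v' \<subseteq> f ` C}"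
    then obtain v where v: "v \<in> fst G" "x' = f ` v" "f ` v \<subseteq> f ` C"
      by blast
    then have "v \<subseteq> C"
      using inj_on_image_subset_iff[OF f Union_upper[OF v(1)] admissible_block_subset[OF P C(1)]] by simp
    then show "x' \<in> (`) f ` {v \<in> fst G. v \<subseteq> C}"
      using v(1,2) by blast
  qed (auto simp: image_mono)
  moreover have "connected_on (snd (map_graph f G)) ((`) f ` {v \<in> fst G. v \<subseteq> C})"
    by (rule connected_on_image[OF admissibleD(3)[OF P C(1)] map_graph_edgeI])
  ultimately show "connected_on (snd (map_graph f G)) {v' \<in> fst (map_graph f G). v' \<subseteq> C'}"
    by simp
qed

lemma bij_betw_admissible_map_graph:
  assumes g: "is_graph G" and f: "inj_on f (\<Union>(fst G))"
  shows "bij_betw ((`) ((`) f)) {P. admissible P G} {Q. admissible Q (map_graph f G)}"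
proof (rule bij_betw_byWitness[where f'="(`) ((`) (inv_into (\<Union>(fst G)) f))"])
  define h where "h = inv_into (\<Union>(fst G)) f"
  have h: "inj_on h (\<Union>(fst (map_graph f G)))"
    unfolding Union_fst_map_graph h_def by (rule inj_on_inv_into) simp
  show "\<forall>P\<in>{P. admissible P G}. (`) ((`) h) ((`) ((`) f) P) = P"
  proof
    fix P assume "P \<in> {P. admissible P G}"
    then have "h ` f ` C = C" if "C \<in> P" for C
      unfolding h_def using inv_into_image_cancel[OF f admissible_block_subset] that by simp
    then have "(\<lambda>C. h ` f ` C) ` P = (\<lambda>C. C) ` P"
      by (intro image_cong) simp_all
    then show "(`) ((`) h) ((`) ((`) f) P) = P"
      by (simp add: image_image)
  qed
  show "\<forall>Q\<in>{Q. admissible Q (map_graph f G)}. (`) ((`) f) ((`) ((`) h) Q) = Q"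
  proof
    fix Q assume "Q \<in> {Q. admissible Q (map_graph f G)}"
    then have sub: "D \<subseteq> f ` \<Union>(fst G)" if "D \<in> Q" for D
      using admissible_block_subset[of Q "map_graph f G" D] that unfolding Union_fst_map_graph by simp
    have "f ` h ` D = D" if "D \<in> Q" for D
      unfolding h_def by (rule image_inv_into_cancel[OF refl sub[OF that]])
    then have "(\<lambda>D. f ` h ` D) ` Q = (\<lambda>D. D) ` Q"
      by (intro image_cong) simp_all
    then show "(`) ((`) f) ((`) ((`) h) Q) = Q"
      by (simp add: image_image)
  qed
  show "(`) ((`) f) ` {P. admissible P G} \<subseteq> {Q. admissible Q (map_graph f G)}"
    using admissible_map_graph[OF g f] by blast
  show "(`) ((`) h) ` {Q. admissible Q (map_graph f G)} \<subseteq> {P. admissible P G}"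
    using admissible_map_graph[OF is_graph_map_graph[OF g f] h] map_graph_inv_into[OF g f]
    unfolding h_def by auto
qed

lemma quot_graph_map_graph:
  assumes g: "is_graph G" and f: "inj_on f (\<Union>(fst G))" and P: "admissible P G"
  shows "quot_graph (map_graph f G) ((`) f ` P) = map_graph f (quot_graph G P)"
proof -
  have vertex_iff: "f ` x \<subseteq> f ` B \<longleftrightarrow> x \<subseteq> B" if "x \<in> fst G" "B \<in> P" for x B
    using inj_on_image_subset_iff[OF f Union_upper[OF that(1)] admissible_block_subset[OF P that(2)]] .
  have "e' \<in> snd (map_graph f (quot_graph G P))" if e': "e' \<in> snd (quot_graph (map_graph f G) ((`) f ` P))" for e'
  proof -
    obtain C' D' v' w' where c: "e' = {C', D'}" "C' \<in> (`) f ` P" "D' \<in> (`) f ` P" "C' \<noteq> D'"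
        "{v', w'} \<in> snd (map_graph f G)" "v' \<subseteq> C'" "w' \<subseteq> D'"
      using e' by (rule quot_graph_edgeE)
    obtain C D where CD: "C \<in> P" "C' = f ` C" "D \<in> P" "D' = f ` D"
      using c(2,3) by blast
    obtain x y where xy: "{x, y} \<in> snd G" "v' = f ` x" "w' = f ` y"
      using g c(5) by (rule map_graph_edgeE)
    have "x \<subseteq> C" "y \<subseteq> D"
      using vertex_iff is_graph_edge_vertices[OF g xy(1)] c(6,7) CD xy(2,3) by auto
    then have "{C, D} \<in> snd (quot_graph G P)"
      using quot_graph_edgeI[OF CD(1,3) _ xy(1)] c(4) CD(2,4) by blast
    then show ?thesis
      using map_graph_edgeI[of C D "quot_graph G P" f] c(1) CD(2,4) by simp
  qed
  moreover have "e' \<in> snd (quot_graph (map_graph f G) ((`) f ` P))" if e': "e' \<in> snd (map_graph f (quot_graph G P))" for e'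
  proof -
    obtain e where e: "e \<in> snd (quot_graph G P)" "e' = (`) ((`) f) e"
      using e' unfolding snd_map_graph by blast
    obtain C D v w where c: "e = {C, D}" "C \<in> P" "D \<in> P" "C \<noteq> D" "{v, w} \<in> snd G" "v \<subseteq> C" "w \<subseteq> D"
      using e(1) by (rule quot_graph_edgeE)
    have "f ` C \<noteq> f ` D"
      using inj_on_image_eq_iff[OF f admissible_block_subset[OF P c(2)] admissible_block_subset[OF P c(3)]] c(4)
      by simp
    then have "{f ` C, f ` D} \<in> snd (quot_graph (map_graph f G) ((`) f ` P))"
      using quot_graph_edgeI[OF imageI[OF c(2)] imageI[OF c(3)] _ map_graph_edgeI[OF c(5)]] c(6,7)
      by (simp add: image_mono)
    then show ?thesis
      using e(2) c(1) by simp
  qed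
  ultimately show ?thesis
    by (auto simp: prod_eq_iff fst_map_graph)
qed

lemma restr_graph_map_graph:
  assumes g: "is_graph G" and f: "inj_on f (\<Union>(fst G))" and P: "admissible P G"
  shows "restr_graph (map_graph f G) ((`) f ` P) = map_graph f (restr_graph G P)"
proof -
  have key: "(\<exists>C'\<in>(`) f ` P. \<Union>((`) ((`) f) e) \<subseteq> C') \<longleftrightarrow> (\<exists>C\<in>P. \<Union>e \<subseteq> C)" if e: "e \<in> snd G" for e
  proof -
    have "\<Union>e \<subseteq> \<Union>(fst G)"
      using is_graphD(3)[OF g e] by auto
    then have "f ` \<Union>e \<subseteq> f ` C \<longleftrightarrow> \<Union>e \<subseteq> C" if "C \<in> P" for C
      using inj_on_image_subset_iff[OF f _ admissible_block_subset[OF P that]] by blast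
    moreover have "\<Union>((`) ((`) f) e) = f ` \<Union>e"
      by blast
    ultimately show ?thesis
      by auto
  qed
  have "e' \<in> snd (restr_graph (map_graph f G) ((`) f ` P)) \<longleftrightarrow> e' \<in> snd (map_graph f (restr_graph G P))"
    for e'
  proof
    assume "e' \<in> snd (restr_graph (map_graph f G) ((`) f ` P))"
    then obtain e where e: "e \<in> snd G" "e' = (`) ((`) f) e" "\<exists>C'\<in>(`) f ` P. \<Union>e' \<subseteq> C'"
      unfolding restr_graph_edge_iff snd_map_graph by blast
    then have "e \<in> snd (restr_graph G P)"
      unfolding restr_graph_edge_iff using key[OF e(1)] by simp
    then show "e' \<in> snd (map_graph f (restr_graph G P))"
      unfolding snd_map_graph e(2) by (rule imageI)
  next
    assume "e' \<in> snd (map_graph f (restr_graph G P))"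
    then obtain e where e: "e \<in> snd (restr_graph G P)" "e' = (`) ((`) f) e"
      unfolding snd_map_graph by blast
    then have "e \<in> snd G" "\<exists>C'\<in>(`) f ` P. \<Union>e' \<subseteq> C'"
      using key unfolding restr_graph_edge_iff by simp_all
    then show "e' \<in> snd (restr_graph (map_graph f G) ((`) f ` P))"
      unfolding restr_graph_edge_iff snd_map_graph e(2) by simp
  qed
  then show ?thesis
    by (auto simp: prod_eq_iff fst_map_graph)
qed

lemma eps'_map_graph: "eps' (map_graph f G) = eps' G"
  unfolding eps'_def snd_map_graph by simp

lemma char_prod_map_graph:
  assumes ch: "character lam" and g: "is_graph G" and f: "inj_on f (\<Union>(fst G))"
  shows "char_prod lam mu (map_graph f G) = char_prod lam (\<lambda>H. mu (map_graph f H)) G"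
proof -
  have "lam (quot_graph (map_graph f G) ((`) f ` P)) * mu (restr_graph (map_graph f G) ((`) f ` P))
      = lam (quot_graph G P) * mu (map_graph f (restr_graph G P))" if P: "admissible P G" for P
  proof -
    have "inj_on f (\<Union>(fst (quot_graph G P)))"
      using f partition_of_Union[OF admissibleD(1)[OF P]] by simp
    then show ?thesis
      unfolding quot_graph_map_graph[OF g f P] restr_graph_map_graph[OF g f P]
      using characterD(1)[OF ch is_graph_quot[OF g admissibleD(1)[OF P]]] by simp
  qed
  then show ?thesis
    unfolding char_prod_def sum.reindex_bij_betw[OF bij_betw_admissible_map_graph[OF g f], symmetric]
    by (intro sum.cong) auto
qed

lemma char_rinv_map_graph:
  assumes ch: "character lam" and nz: "nonzero_on_bullets lam"
  shows "is_graph G \<Longrightarrow> inj_on f (\<Union>(fst G)) \<Longrightarrow> char_rinv lam (map_graph f G) = char_rinv lam G"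
proof (induction "card (snd G)" arbitrary: G rule: less_induct)
  case less
  show ?case
  proof (rule char_rinv_unique[OF ch nz less.prems(1)])
    show "char_prod lam (\<lambda>H. char_rinv lam (map_graph f H)) G = eps' G"
      using char_prod_map_graph[OF ch less.prems, symmetric]
        char_prod_char_rinv[OF ch nz is_graph_map_graph[OF less.prems]] eps'_map_graph by metis
    fix P assume "admissible P G" "\<not> internal P G"
    then show "char_rinv lam (map_graph f (restr_graph G P)) = char_rinv lam (restr_graph G P)"
      using less.hyps[OF card_restr_edges_less[OF less.prems(1)] is_graph_restr[OF less.prems(1)]]
        less.prems(2) by simp
  qed
qed

section \<open>Disjoint unions\<close>

lemma fst_graph_union: "fst (graph_union G H) = fst G \<union> fst H"
  unfolding graph_union_def by simp

lemma snd_graph_union: "snd (graph_union G H) = snd G \<union> snd H"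
  unfolding graph_union_def by simp

lemma Union_fst_graph_union: "\<Union>(fst (graph_union G H)) = \<Union>(fst G) \<union> \<Union>(fst H)"
  unfolding fst_graph_union by blast

lemma graph_union_commute: "graph_union G H = graph_union H G"
  unfolding graph_union_def by (simp add: Un_commute)

lemma is_graph_union:
  assumes g: "is_graph G" and h: "is_graph H" and d: "\<Union>(fst G) \<inter> \<Union>(fst H) = {}"
  shows "is_graph (graph_union G H)"
  unfolding is_graph_def Union_fst_graph_union
proof (intro conjI ballI)
  show "finite (\<Union>(fst G) \<union> \<Union>(fst H))"
    using is_graphD(1)[OF g] is_graphD(1)[OF h] by simp
  show "partition_of (fst (graph_union G H)) (\<Union>(fst G) \<union> \<Union>(fst H))"
    unfolding fst_graph_union by (rule partition_of_Un[OF is_graphD(2)[OF g] is_graphD(2)[OF h] d])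
  fix e assume "e \<in> snd (graph_union G H)"
  then have "e \<in> snd G \<or> e \<in> snd H"
    unfolding snd_graph_union by blast
  then show "\<exists>v w. v \<in> fst (graph_union G H) \<and> w \<in> fst (graph_union G H) \<and> v \<noteq> w \<and> e = {v, w}"
    unfolding fst_graph_union using is_graphD(3)[OF g] is_graphD(3)[OF h] by blast
qed

locale disjoint_graphs =
  fixes G H :: graph
  assumes g: "is_graph G" and h: "is_graph H" and disjoint: "\<Union>(fst G) \<inter> \<Union>(fst H) = {}"
begin

abbreviation U :: graph where
  "U \<equiv> graph_union G H"

lemma is_graph_U: "is_graph U"
  using is_graph_union[OF g h disjoint] .

lemma swap: "disjoint_graphs H G"
  using g h disjoint by unfold_locales blast+

lemma vertex_not_right: "v \<in> fst G \<Longrightarrow> \<not> v \<subseteq> \<Union>(fst H)"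
  using is_graph_vertex_nonempty[OF g] disjoint by blast

lemma edge_left_right: "{x, y} \<in> snd U \<Longrightarrow> x \<in> fst G \<Longrightarrow> {x, y} \<in> snd G"
  using is_graph_edge_vertices[OF h] vertex_not_right unfolding snd_graph_union by blast

lemma vertices_below_left:
  assumes "C \<subseteq> \<Union>(fst G)"
  shows "{v \<in> fst U. v \<subseteq> C} = {v \<in> fst G. v \<subseteq> C}"
proof -
  have "\<not> v \<subseteq> C" if "v \<in> fst H" for v
    using disjoint_graphs.vertex_not_right[OF swap that] assms by blast
  then show ?thesis
    unfolding fst_graph_union by blast
qed

lemma block_of_left_vertex:
  assumes "admissible P2 H" "v \<in> fst G" "v \<subseteq> C" "C \<in> P1 \<union> P2"
  shows "C \<in> P1"
  using assms admissible_block_subset[OF assms(1)] vertex_not_right by blast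

lemma admissible_Un:
  assumes P1: "admissible P1 G" and P2: "admissible P2 H"
  shows "admissible (P1 \<union> P2) U"
  unfolding admissible_def Union_fst_graph_union
proof (intro conjI ballI)
  show "partition_of (P1 \<union> P2) (\<Union>(fst G) \<union> \<Union>(fst H))"
    by (rule partition_of_Un[OF admissibleD(1)[OF P1] admissibleD(1)[OF P2] disjoint])
  show "\<exists>C\<in>P1 \<union> P2. v \<subseteq> C" if v: "v \<in> fst U" for v
  proof -
    have "v \<in> fst G \<or> v \<in> fst H"
      using v unfolding fst_graph_union by simp
    then show ?thesis
      using admissibleD(2)[OF P1, of v] admissibleD(2)[OF P2, of v] by blast
  qed
  fix C assume C: "C \<in> P1 \<union> P2"
  show "connected_on (snd U) {v \<in> fst U. v \<subseteq> C}"
  proof (cases "C \<in> P1")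
    case True
    then have "{v \<in> fst U. v \<subseteq> C} = {v \<in> fst G. v \<subseteq> C}"
      using vertices_below_left admissible_block_subset[OF P1] by simp
    then show ?thesis
      using connected_on_mono_edges[OF admissibleD(3)[OF P1 True]] by (simp add: snd_graph_union)
  next
    case False
    then have C2: "C \<in> P2"
      using C by blast
    then have "{v \<in> fst U. v \<subseteq> C} = {v \<in> fst H. v \<subseteq> C}"
      using disjoint_graphs.vertices_below_left[OF swap] admissible_block_subset[OF P2]
      by (simp add: graph_union_commute)
    then show ?thesis
      using connected_on_mono_edges[OF admissibleD(3)[OF P2 C2]] by (simp add: snd_graph_union)
  qed
qed

lemma admissible_union_block_side:
  assumes P: "admissible P U" and C: "C \<in> P" and v: "v \<in> fst G" "v \<subseteq> C"
  shows "C \<subseteq> \<Union>(fst G)"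
proof -
  define W where "W = {v \<in> fst U. v \<subseteq> C}"
  have "W \<subseteq> fst G"
  proof (rule connected_on_subset_closed[OF admissibleD(3)[OF P C, folded W_def]])
    show "v \<in> W" "v \<in> fst G"
      using v unfolding W_def fst_graph_union by auto
    show "y \<in> fst G" if "x \<in> W" "y \<in> W" "{x, y} \<in> snd U" "x \<in> fst G" for x y
      using is_graph_edge_vertices[OF g edge_left_right[OF that(3,4)]] by simp
  qed
  then show ?thesis
    using admissible_block_eq_Union[OF is_graph_U P C] unfolding W_def by blast
qed

lemma admissible_union_left:
  assumes P: "admissible P U"
  shows "admissible {C \<in> P. C \<subseteq> \<Union>(fst G)} G"
  unfolding admissible_def
proof (intro conjI ballI)
  have Pp: "partition_of P (\<Union>(fst G) \<union> \<Union>(fst H))"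
    using admissibleD(1)[OF P] unfolding Union_fst_graph_union .
  have left: "C \<in> {C \<in> P. C \<subseteq> \<Union>(fst G)}" if "C \<in> P" "v \<in> fst G" "v \<subseteq> C" for C v
    using admissible_union_block_side[OF P that] that(1) by blast
  have block: "\<exists>C\<in>{C \<in> P. C \<subseteq> \<Union>(fst G)}. v \<subseteq> C" if v: "v \<in> fst G" for v
  proof -
    obtain C where "C \<in> P" "v \<subseteq> C"
      using admissibleD(2)[OF P, of v] v unfolding fst_graph_union by blast
    then show ?thesis
      using left[of C v] v by blast
  qed
  then show "\<exists>C\<in>{C \<in> P. C \<subseteq> \<Union>(fst G)}. v \<subseteq> C" if "v \<in> fst G" for v
    using that .
  show "partition_of {C \<in> P. C \<subseteq> \<Union>(fst G)} (\<Union>(fst G))"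
    unfolding partition_of_def
  proof (intro conjI ballI impI)
    show "\<Union>{C \<in> P. C \<subseteq> \<Union>(fst G)} = \<Union>(fst G)"
      using block by blast
  qed (use partition_of_nonempty[OF Pp] partition_of_disjoint[OF Pp] in auto)
  fix C assume C: "C \<in> {C \<in> P. C \<subseteq> \<Union>(fst G)}"
  then have "connected_on (snd U) {v \<in> fst U. v \<subseteq> C}"
    using admissibleD(3)[OF P] by simp
  then have "connected_on (snd U) {v \<in> fst G. v \<subseteq> C}"
    using vertices_below_left C by simp
  then show "connected_on (snd G) {v \<in> fst G. v \<subseteq> C}"
    by (rule connected_on_mono_edges) (use edge_left_right in blast)
qed

lemma admissible_union_right:
  assumes P: "admissible P U"
  shows "admissible {C \<in> P. C \<subseteq> \<Union>(fst H)} H"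
  using disjoint_graphs.admissible_union_left[OF swap] P graph_union_commute by metis

lemma admissible_union_split:
  assumes P: "admissible P U"
  shows "{C \<in> P. C \<subseteq> \<Union>(fst G)} \<union> {C \<in> P. C \<subseteq> \<Union>(fst H)} = P"
proof -
  have "C \<subseteq> \<Union>(fst G) \<or> C \<subseteq> \<Union>(fst H)" if C: "C \<in> P" for C
  proof -
    obtain v where v: "v \<in> fst U" "v \<subseteq> C"
      using connected_on_nonempty[OF admissibleD(3)[OF P C]] by blast
    then show ?thesis
      using admissible_union_block_side[OF P C] disjoint_graphs.admissible_union_block_side[OF swap]
        P C graph_union_commute unfolding fst_graph_union by (metis Un_iff)
  qed
  then show ?thesis
    by blast
qed

lemma admissible_Un_left:
  assumes P1: "admissible P1 G" and P2: "admissible P2 H"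
  shows "{C \<in> P1 \<union> P2. C \<subseteq> \<Union>(fst G)} = P1"
proof -
  have "\<not> C \<subseteq> \<Union>(fst G)" if "C \<in> P2" for C
    using admissible_block_subset[OF P2 that] partition_of_nonempty[OF admissibleD(1)[OF P2] that]
      disjoint by blast
  then show ?thesis
    using admissible_block_subset[OF P1] by blast
qed

lemma bij_betw_admissible_union:
  "bij_betw (\<lambda>(P1, P2). P1 \<union> P2) ({P. admissible P G} \<times> {P. admissible P H}) {P. admissible P U}"
proof (rule bij_betw_byWitness[where f'="\<lambda>P. ({C \<in> P. C \<subseteq> \<Union>(fst G)}, {C \<in> P. C \<subseteq> \<Union>(fst H)})"])
  show "\<forall>a\<in>{P. admissible P G} \<times> {P. admissible P H}.
      (\<lambda>P. ({C \<in> P. C \<subseteq> \<Union>(fst G)}, {C \<in> P. C \<subseteq> \<Union>(fst H)})) ((\<lambda>(P1, P2). P1 \<union> P2) a) = a"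
  proof
    fix a assume "a \<in> {P. admissible P G} \<times> {P. admissible P H}"
    then obtain P1 P2 where P: "admissible P1 G" "admissible P2 H" and a: "a = (P1, P2)"
      by blast
    have "{C \<in> P2 \<union> P1. C \<subseteq> \<Union>(fst H)} = P2"
      using disjoint_graphs.admissible_Un_left[OF swap P(2,1)] .
    then show "(\<lambda>P. ({C \<in> P. C \<subseteq> \<Union>(fst G)}, {C \<in> P. C \<subseteq> \<Union>(fst H)})) ((\<lambda>(P1, P2). P1 \<union> P2) a) = a"
      using admissible_Un_left[OF P] unfolding a by (simp add: Un_commute)
  qed
  show "\<forall>P\<in>{P. admissible P U}.
      (\<lambda>(P1, P2). P1 \<union> P2) ((\<lambda>P. ({C \<in> P. C \<subseteq> \<Union>(fst G)}, {C \<in> P. C \<subseteq> \<Union>(fst H)})) P) = P"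
    using admissible_union_split by simp
  show "(\<lambda>(P1, P2). P1 \<union> P2) ` ({P. admissible P G} \<times> {P. admissible P H}) \<subseteq> {P. admissible P U}"
    using admissible_Un by auto
  show "(\<lambda>P. ({C \<in> P. C \<subseteq> \<Union>(fst G)}, {C \<in> P. C \<subseteq> \<Union>(fst H)})) ` {P. admissible P U}
      \<subseteq> {P. admissible P G} \<times> {P. admissible P H}"
    using admissible_union_left admissible_union_right by auto
qed

end

context disjoint_graphs
begin

lemma edge_block_left:
  assumes "e \<in> snd G" "admissible P2 H" "C \<in> P1 \<union> P2" "\<Union>e \<subseteq> C"
  shows "C \<in> P1"
proof -
  obtain v w where "v \<in> fst G" "e = {v, w}"
    using is_graphD(3)[OF g assms(1)] by blast
  then show ?thesis
    using block_of_left_vertex[OF assms(2) _ _ assms(3)] assms(4) by blast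
qed

lemma quot_graph_union:
  assumes P1: "admissible P1 G" and P2: "admissible P2 H"
  shows "quot_graph U (P1 \<union> P2) = graph_union (quot_graph G P1) (quot_graph H P2)"
proof -
  have "e \<in> snd (quot_graph G P1) \<union> snd (quot_graph H P2)" if e: "e \<in> snd (quot_graph U (P1 \<union> P2))" for e
  proof -
    obtain C D v w where c: "e = {C, D}" "C \<in> P1 \<union> P2" "D \<in> P1 \<union> P2" "C \<noteq> D"
        "{v, w} \<in> snd U" "v \<subseteq> C" "w \<subseteq> D"
      using e by (rule quot_graph_edgeE)
    have "{v, w} \<in> snd G \<or> {v, w} \<in> snd H"
      using c(5) unfolding snd_graph_union by blast
    then show ?thesis
    proof
      assume vw: "{v, w} \<in> snd G"
      then have "C \<in> P1" "D \<in> P1"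
        using block_of_left_vertex[OF P2] is_graph_edge_vertices[OF g vw] c(2,3,6,7) by blast+
      then show ?thesis
        using quot_graph_edgeI[OF _ _ c(4) vw c(6,7)] c(1) by blast
    next
      assume vw: "{v, w} \<in> snd H"
      then have "C \<in> P2" "D \<in> P2"
        using disjoint_graphs.block_of_left_vertex[OF swap P1] is_graph_edge_vertices[OF h vw] c(2,3,6,7)
        by blast+
      then show ?thesis
        using quot_graph_edgeI[OF _ _ c(4) vw c(6,7)] c(1) by blast
    qed
  qed
  moreover have "e \<in> snd (quot_graph U (P1 \<union> P2))" if "e \<in> snd (quot_graph G P1) \<union> snd (quot_graph H P2)" for e
    using that by (auto elim!: quot_graph_edgeE intro!: quot_graph_edgeI simp: snd_graph_union)
  ultimately show ?thesis
    unfolding graph_union_def by (auto simp: prod_eq_iff)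
qed

lemma restr_graph_union:
  assumes P1: "admissible P1 G" and P2: "admissible P2 H"
  shows "restr_graph U (P1 \<union> P2) = graph_union (restr_graph G P1) (restr_graph H P2)"
proof -
  have left: "(\<exists>C\<in>P1 \<union> P2. \<Union>e \<subseteq> C) \<longleftrightarrow> (\<exists>C\<in>P1. \<Union>e \<subseteq> C)" if "e \<in> snd G" for e
    using edge_block_left[OF that P2] by blast
  have right: "(\<exists>C\<in>P1 \<union> P2. \<Union>e \<subseteq> C) \<longleftrightarrow> (\<exists>C\<in>P2. \<Union>e \<subseteq> C)" if "e \<in> snd H" for e
    using disjoint_graphs.edge_block_left[OF swap that P1] by blast
  have "e \<in> snd (restr_graph U (P1 \<union> P2)) \<longleftrightarrow> e \<in> snd (restr_graph G P1) \<union> snd (restr_graph H P2)"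
    for e
    unfolding Un_iff restr_graph_edge_iff snd_graph_union using left[of e] right[of e] by blast
  then show ?thesis
    unfolding graph_union_def by (auto simp: prod_eq_iff)
qed

lemma char_prod_union:
  assumes ch: "character lam"
    and nu: "\<And>P1 P2. admissible P1 G \<Longrightarrow> admissible P2 H \<Longrightarrow>
      nu (graph_union (restr_graph G P1) (restr_graph H P2)) = mu1 (restr_graph G P1) * mu2 (restr_graph H P2)"
  shows "char_prod lam nu U = char_prod lam mu1 G * char_prod lam mu2 H"
proof -
  have "lam (quot_graph U (P1 \<union> P2)) * nu (restr_graph U (P1 \<union> P2))
      = (lam (quot_graph G P1) * mu1 (restr_graph G P1)) * (lam (quot_graph H P2) * mu2 (restr_graph H P2))"
    if P1: "admissible P1 G" and P2: "admissible P2 H" for P1 P2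
  proof -
    have "\<Union>(fst (quot_graph G P1)) \<inter> \<Union>(fst (quot_graph H P2)) = {}"
      using disjoint partition_of_Union[OF admissibleD(1)[OF P1]] partition_of_Union[OF admissibleD(1)[OF P2]]
      by simp
    then have "lam (quot_graph U (P1 \<union> P2)) = lam (quot_graph G P1) * lam (quot_graph H P2)"
      unfolding quot_graph_union[OF P1 P2]
      using characterD(2)[OF ch is_graph_quot[OF g admissibleD(1)[OF P1]] is_graph_quot[OF h admissibleD(1)[OF P2]]]
      by blast
    then show ?thesis
      unfolding restr_graph_union[OF P1 P2] nu[OF P1 P2] by (simp add: mult_ac)
  qed
  then show ?thesis
    unfolding char_prod_def sum_product sum.cartesian_product
      sum.reindex_bij_betw[OF bij_betw_admissible_union, symmetric]
    by (intro sum.cong) auto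
qed

lemma disjoint_graphs_restr: "disjoint_graphs (restr_graph G P1) (restr_graph H P2)"
  using is_graph_restr[OF g] is_graph_restr[OF h] disjoint by unfold_locales simp_all

lemma graph_union_restr_eq_U:
  assumes "graph_union (restr_graph G P1) (restr_graph H P2) = U"
  shows "restr_graph G P1 = G \<and> restr_graph H P2 = H"
proof -
  have edges: "e \<notin> snd H" if e: "e \<in> snd G" for e
  proof
    assume "e \<in> snd H"
    obtain v w where "v \<in> fst G" "e = {v, w}"
      using is_graphD(3)[OF g e] by blast
    then show False
      using is_graph_edge_vertices(1)[OF h] \<open>e \<in> snd H\<close> vertex_not_right by blast
  qed
  have "snd (restr_graph G P1) \<union> snd (restr_graph H P2) = snd G \<union> snd H"
    using arg_cong[OF assms, of snd] unfolding snd_graph_union .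
  then have "snd (restr_graph G P1) = snd G \<and> snd (restr_graph H P2) = snd H"
    using restr_graph_edges_subset[of G P1] restr_graph_edges_subset[of H P2] edges by blast
  then show ?thesis
    by (simp add: prod_eq_iff)
qed

lemma card_restr_union_less:
  assumes "\<not> (restr_graph G P1 = G \<and> restr_graph H P2 = H)"
  shows "card (snd (restr_graph G P1)) + card (snd (restr_graph H P2)) < card (snd G) + card (snd H)"
  using card_restr_edges_le[OF g] card_restr_edges_le[OF h] assms
    restr_graph_neq_card_less[OF g] restr_graph_neq_card_less[OF h]
  by (meson add_le_less_mono add_less_le_mono)

end

lemma char_rinv_graph_union:
  assumes ch: "character lam" and nz: "nonzero_on_bullets lam"
  shows "disjoint_graphs G H \<Longrightarrow> char_rinv lam (graph_union G H) = char_rinv lam G * char_rinv lam H"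
proof (induction "card (snd G) + card (snd H)" arbitrary: G H rule: less_induct)
  case less
  interpret disjoint_graphs G H
    by (fact less.prems)
  define nu where "nu X = (if X = U then char_rinv lam G * char_rinv lam H else char_rinv lam X)" for X
  have "nu U = char_rinv lam U"
  proof (rule char_rinv_unique[OF ch nz is_graph_U])
    have "nu (graph_union (restr_graph G P1) (restr_graph H P2))
        = char_rinv lam (restr_graph G P1) * char_rinv lam (restr_graph H P2)"
      if "admissible P1 G" "admissible P2 H" for P1 P2
    proof (cases "restr_graph G P1 = G \<and> restr_graph H P2 = H")
      case True
      then show ?thesis
        unfolding nu_def by simp
    next
      case False
      then show ?thesis
        using less.hyps[OF card_restr_union_less disjoint_graphs_restr] graph_union_restr_eq_U
        unfolding nu_def by auto
    qed
    then have "char_prod lam nu U = char_prod lam (char_rinv lam) G * char_prod lam (char_rinv lam) H"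
      by (rule char_prod_union[OF ch])
    then show "char_prod lam nu U = eps' U"
      unfolding char_prod_char_rinv[OF ch nz g] char_prod_char_rinv[OF ch nz h]
      by (simp add: eps'_def snd_graph_union)
  next
    fix P assume "admissible P U" "\<not> internal P U"
    then have "restr_graph U P \<noteq> U"
      unfolding internal_iff_restr_edges by auto
    then show "nu (restr_graph U P) = char_rinv lam (restr_graph U P)"
      unfolding nu_def by simp
  qed
  then show ?case
    unfolding nu_def by simp
qed

section \<open>Invertible characters\<close>

lemma character_char_rinv:
  assumes ch: "character lam" and nz: "nonzero_on_bullets lam"
  shows "character (char_rinv lam)"
  unfolding character_def
  using char_rinv_map_graph[OF ch nz] char_rinv_graph_union[OF ch nz disjoint_graphs.intro]
    char_rinv_empty_graph[OF ch] by simp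

lemma nonzero_on_bullets_char_rinv:
  "nonzero_on_bullets lam \<Longrightarrow> nonzero_on_bullets (char_rinv lam)"
  unfolding nonzero_on_bullets_def by (simp add: char_rinv_bullet)

lemma char_prod_cong:
  assumes g: "is_graph G"
    and "\<And>H. is_graph H \<Longrightarrow> a H = a' H" "\<And>H. is_graph H \<Longrightarrow> b H = b' H"
  shows "char_prod a b G = char_prod a' b' G"
  unfolding char_prod_def
  using assms is_graph_quot[OF g admissibleD(1)] is_graph_restr[OF g] by (intro sum.cong) auto

lemma char_prod_inverses_eq:
  assumes lam_mu: "\<And>G. is_graph G \<Longrightarrow> char_prod lam mu G = eps' G"
    and mu_rho: "\<And>G. is_graph G \<Longrightarrow> char_prod mu rho G = eps' G"
    and g: "is_graph G"
  shows "lam G = rho G"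
proof -
  have "lam G = char_prod lam eps' G"
    by (rule char_prod_eps'_right[OF g, symmetric])
  also have "\<dots> = char_prod lam (char_prod mu rho) G"
    by (rule char_prod_cong[OF g]) (simp_all add: mu_rho)
  also have "\<dots> = char_prod (char_prod lam mu) rho G"
    by (rule char_prod_assoc[OF g, symmetric])
  also have "\<dots> = char_prod eps' rho G"
    by (rule char_prod_cong[OF g]) (simp_all add: lam_mu)
  also have "\<dots> = rho G"
    by (rule char_prod_eps'_left[OF g])
  finally show ?thesis .
qed

lemma char_prod_bullet:
  assumes "finite A" "A \<noteq> {}"
  shows "char_prod a b (bullet A) = a (bullet A) * b (bullet A)"
proof -
  have g: "is_graph (bullet A)" and e: "snd (bullet A) = {}"
    using is_graph_bullet[OF assms] unfolding bullet_def by simp_all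
  have "{P. admissible P (bullet A)} = {fst (bullet A)}"
    using admissible_restr_edgeless_imp_vertices[OF g] restr_graph_edges_subset[of "bullet A"] e
      admissible_vertices[OF g] by blast
  moreover have "restr_graph (bullet A) (fst (bullet A)) = bullet A"
    using restr_graph_vertices_edgeless[OF g] e by (simp add: prod_eq_iff)
  ultimately show ?thesis
    unfolding char_prod_def using quot_graph_vertices[OF g] by simp
qed

theorem lemma49:
  fixes lam :: "graph \<Rightarrow> 'k::field"
  assumes "character lam"
  shows "char_invertible lam \<longleftrightarrow> (\<forall>A. finite A \<and> A \<noteq> {} \<longrightarrow> lam (bullet A) \<noteq> 0)"
proof
  assume "char_invertible lam"
  then obtain mu where mu: "\<And>G. is_graph G \<Longrightarrow> char_prod lam mu G = eps' G"
    unfolding char_invertible_def by blast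
  have "lam (bullet A) * mu (bullet A) = 1" if "finite A" "A \<noteq> {}" for A
    using mu[OF is_graph_bullet[OF that]] unfolding char_prod_bullet[OF that]
    by (simp add: eps'_def bullet_def)
  then show "\<forall>A. finite A \<and> A \<noteq> {} \<longrightarrow> lam (bullet A) \<noteq> 0"
    by fastforce
next
  assume "\<forall>A. finite A \<and> A \<noteq> {} \<longrightarrow> lam (bullet A) \<noteq> 0"
  then have nz: "nonzero_on_bullets lam"
    unfolding nonzero_on_bullets_def .
  define mu where "mu = char_rinv lam"
  have mu: "character mu" "nonzero_on_bullets mu"
    unfolding mu_def using character_char_rinv[OF assms nz] nonzero_on_bullets_char_rinv[OF nz] .
  have lam_mu: "char_prod lam mu G = eps' G" and mu_rho: "char_prod mu (char_rinv mu) G = eps' G"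
    if "is_graph G" for G
    unfolding mu_def using char_prod_char_rinv[OF assms nz that] char_prod_char_rinv[OF mu that]
    by (simp_all add: mu_def)
  have "char_prod mu lam G = char_prod mu (char_rinv mu) G" if g: "is_graph G" for G
    by (rule char_prod_cong[OF g]) (simp_all add: char_prod_inverses_eq[OF lam_mu mu_rho])
  then have "char_prod mu lam G = eps' G" if "is_graph G" for G
    using mu_rho that by simp
  then show "char_invertible lam"
    unfolding char_invertible_def using mu(1) lam_mu by blast
qed

end
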